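(* For the erased fair coin flips source and $(d_s,d_x)\in\mathcal D_{\mathrm{in}}$, any $(k,M,d_s,d_x,\epsilon)$ code must satisfy \[\epsilon\ge\sup_{\gamma\ge0}\Bigg\{\mathbb P\Bigg[\sum_{i=1}^k\Big(\jmath_X(X_i,d_s,d_x)+\lambda_s^\star\big(\mathsf d_s(S_i,0)-\bar{\mathsf d}_s(X_i,0)\big)\Big)\ge\gamma+\log M\Bigg]-\exp(-\gamma)\Bigg\},\] where $\{(S_i,X_i)\}_{i=1}^k$ are i.i.d. drawn from the EFCF source, $\mathsf d_s(s,z)=1\{s\ne z\}$, and $\bar{\mathsf d}_s(x,z)=1\{x\ne z\}$ if $x\ne e$, $\bar{\mathsf d}_s(e,z)=1/2$.
   Context: EFCF source: $S$ uniform on $\{0,1\}$; $X\in\{0,1,e\}$ equals $S$ w.p. $1-\delta$ and $e$ w.p. $\delta$. Single-letter reconstructions $Z\in\{0,1\}$, $Y\in\{0,1,e\}$, Hamming distortions $\mathsf d_s(s,z)=1\{s\ne z\}$, $\mathsf d_x(x,y)=1\{x\ne y\}$; block distortions are the normalized sums. A $(k,M,d_s,d_x,\epsilon)$ code is a random encoder $P_{U|X^k}$ into $\{1,\dots,M\}$ and random decoder $P_{Z^kY^k|U}$ with $\mathbb P[\mathsf d_s(S^k,Z^k)>d_s\text{ or }\mathsf d_x(X^k,Y^k)>d_x]\le\epsilon$. Single-letter quantities: $\bar{\mathsf d}_s(x,z)=\mathbb E[\mathsf d_s(S,z)\mid X=x]$; $R(d_s,d_x)=\min_{P_{ZY|X}}I(X;Z,Y)$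 s.t. $\mathbb E[\bar{\mathsf d}_s(X,Z)]\le d_s$, $\mathbb E[\mathsf d_x(X,Y)]\le d_x$, with minimizer set $\mathcal P^\star$. With $\mathcal D_{\mathrm{adm}}=\{d_s\ge\mathbb E[\min_z\bar{\mathsf d}_s(X,z)],\ d_x\ge\mathbb E[\min_y\mathsf d_x(X,y)]\}$, partition it into $\mathcal D_{sx}$ (every minimizer tight in both constraints), $\mathcal D_{\bar sx}$ (some minimizer strict in $s$, every minimizer tight in $x$), $\mathcal D_{s\bar x}$ (every minimizer tight in $s$, some strict in $x$), $\mathcal D_{\bar s\bar x}$ (some minimizer strict in $s$, some strict in $x$); $\mathcal D_{\mathrm{in}}$ is the union of the interiors, on which $R$ is differentiable; $\lambda_s^\star=-\partial R/\partial d_s$, $\lambda_x^\star=-\partial R/\partial d_x$. Fix a minimizer $P_{Z^\star Y^\star|X}$ with output marginal $P_{Z^\star Y^\star}$; $\jmath_X(x,d_s,d_x)=-\log\mathbb E[\exp\{\lambda_s^\star d_s+\lambda_x^\star d_x-\lambda_s^\star\bar{\mathsf d}_s(x,Z^\star)-\lambda_x^\star\mathsf d_x(x,Y^\star)\}]$ (expectation over $P_{Z^\star Y^\star}$). $\log,\exp$ to a common base. *)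

theory Defs
  imports "HOL-Analysis.Analysis" "HOL-Probability.Probability"
begin

text \<open>Conventions: source bit S and reconstruction Z are bool (0 = False, 1 = True);
  X and Y range over option bool, where None is the erasure symbol e and
  Some b is the bit b.\<close>

type_synonym sym = "bool option"

definition efcf :: "real \<Rightarrow> (bool \<times> sym) pmf" where
  "efcf \<delta> = do { s \<leftarrow> bernoulli_pmf (1/2); er \<leftarrow> bernoulli_pmf \<delta>;
                 return_pmf (s, if er then None else Some s) }"

definition efcfX :: "real \<Rightarrow> sym pmf" where
  "efcfX \<delta> = map_pmf snd (efcf \<delta>)"

definition d_s :: "bool \<Rightarrow> bool \<Rightarrow> real" where
  "d_s s z = (if s \<noteq> z then 1 else 0)"

definition d_x :: "sym \<Rightarrow> sym \<Rightarrow> real" where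
  "d_x x y = (if x \<noteq> y then 1 else 0)"

definition dbar_s :: "sym \<Rightarrow> bool \<Rightarrow> real" where
  "dbar_s x z = (case x of None \<Rightarrow> 1/2 | Some b \<Rightarrow> (if b \<noteq> z then 1 else 0))"

definition blk_ds :: "nat \<Rightarrow> (nat \<Rightarrow> bool) \<Rightarrow> (nat \<Rightarrow> bool) \<Rightarrow> real" where
  "blk_ds k s z = (\<Sum>i<k. d_s (s i) (z i)) / real k"

definition blk_dx :: "nat \<Rightarrow> (nat \<Rightarrow> sym) \<Rightarrow> (nat \<Rightarrow> sym) \<Rightarrow> real" where
  "blk_dx k x y = (\<Sum>i<k. d_x (x i) (y i)) / real k"

definition efcf_block :: "real \<Rightarrow> nat \<Rightarrow> (nat \<Rightarrow> bool \<times> sym) pmf" where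
  "efcf_block \<delta> k = Pi_pmf {..<k} (False, None) (\<lambda>_. efcf \<delta>)"

definition is_code ::
  "real \<Rightarrow> nat \<Rightarrow> nat \<Rightarrow> real \<Rightarrow> real \<Rightarrow> real \<Rightarrow>
   ((nat \<Rightarrow> sym) \<Rightarrow> nat pmf) \<Rightarrow> (nat \<Rightarrow> ((nat \<Rightarrow> bool) \<times> (nat \<Rightarrow> sym)) pmf) \<Rightarrow> bool" where
  "is_code \<delta> k M ds dx \<epsilon> enc dec \<longleftrightarrow>
     (\<forall>x. set_pmf (enc x) \<subseteq> {1..M}) \<and>
     measure_pmf.prob
       (do { v \<leftarrow> efcf_block \<delta> k; u \<leftarrow> enc (\<lambda>i. snd (v i)); zy \<leftarrow> dec u; return_pmf (v, zy) })
       {(v, (z, y)). blk_ds k (\<lambda>i. fst (v i)) z > ds \<or> blk_dx k (\<lambda>i. snd (v i)) y > dx}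
     \<le> \<epsilon>"

type_synonym chan = "sym \<Rightarrow> (bool \<times> sym) pmf"

definition Eds :: "real \<Rightarrow> chan \<Rightarrow> real" where
  "Eds \<delta> W = (\<Sum>x\<in>UNIV. pmf (efcfX \<delta>) x * (\<Sum>zy\<in>UNIV. pmf (W x) zy * dbar_s x (fst zy)))"

definition Edx :: "real \<Rightarrow> chan \<Rightarrow> real" where
  "Edx \<delta> W = (\<Sum>x\<in>UNIV. pmf (efcfX \<delta>) x * (\<Sum>zy\<in>UNIV. pmf (W x) zy * d_x x (snd zy)))"

definition out_marg :: "real \<Rightarrow> chan \<Rightarrow> (bool \<times> sym) \<Rightarrow> real" where
  "out_marg \<delta> W zy = (\<Sum>x\<in>UNIV. pmf (efcfX \<delta>) x * pmf (W x) zy)"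

definition MI :: "real \<Rightarrow> chan \<Rightarrow> real" where
  "MI \<delta> W = (\<Sum>x\<in>UNIV. \<Sum>zy\<in>UNIV.
      pmf (efcfX \<delta>) x * pmf (W x) zy * ln (pmf (W x) zy / out_marg \<delta> W zy))"

definition feasible :: "real \<Rightarrow> real \<Rightarrow> real \<Rightarrow> chan \<Rightarrow> bool" where
  "feasible \<delta> ds dx W \<longleftrightarrow> Eds \<delta> W \<le> ds \<and> Edx \<delta> W \<le> dx"

definition Rfun :: "real \<Rightarrow> real \<Rightarrow> real \<Rightarrow> real" where
  "Rfun \<delta> ds dx = Inf {MI \<delta> W | W. feasible \<delta> ds dx W}"

definition Pstar :: "real \<Rightarrow> real \<Rightarrow> real \<Rightarrow> chan set" where
  "Pstar \<delta> ds dx = {W. feasible \<delta> ds dx W \<and> MI \<delta> W = Rfun \<delta> ds dx}"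

definition Dadm :: "real \<Rightarrow> (real \<times> real) set" where
  "Dadm \<delta> = {(ds, dx).
      ds \<ge> (\<Sum>x\<in>UNIV. pmf (efcfX \<delta>) x * min (dbar_s x False) (dbar_s x True)) \<and>
      dx \<ge> (\<Sum>x\<in>UNIV. pmf (efcfX \<delta>) x * Min (range (d_x x)))}"

definition D_sx :: "real \<Rightarrow> (real \<times> real) set" where
  "D_sx \<delta> = {(ds, dx) \<in> Dadm \<delta>.
      \<forall>W\<in>Pstar \<delta> ds dx. Eds \<delta> W = ds \<and> Edx \<delta> W = dx}"

definition D_sbar_x :: "real \<Rightarrow> (real \<times> real) set" where
  "D_sbar_x \<delta> = {(ds, dx) \<in> Dadm \<delta>.
      (\<exists>W\<in>Pstar \<delta> ds dx. Eds \<delta> W < ds) \<and> (\<forall>W\<in>Pstar \<delta> ds dx. Edx \<delta> W = dx)}"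

definition D_s_xbar :: "real \<Rightarrow> (real \<times> real) set" where
  "D_s_xbar \<delta> = {(ds, dx) \<in> Dadm \<delta>.
      (\<forall>W\<in>Pstar \<delta> ds dx. Eds \<delta> W = ds) \<and> (\<exists>W\<in>Pstar \<delta> ds dx. Edx \<delta> W < dx)}"

definition D_sbar_xbar :: "real \<Rightarrow> (real \<times> real) set" where
  "D_sbar_xbar \<delta> = {(ds, dx) \<in> Dadm \<delta>.
      (\<exists>W\<in>Pstar \<delta> ds dx. Eds \<delta> W < ds) \<and> (\<exists>W\<in>Pstar \<delta> ds dx. Edx \<delta> W < dx)}"

definition D_in :: "real \<Rightarrow> (real \<times> real) set" where
  "D_in \<delta> = interior (D_sx \<delta>) \<union> interior (D_sbar_x \<delta>) \<union>
             interior (D_s_xbar \<delta>) \<union> interior (D_sbar_xbar \<delta>)"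

definition lam_s :: "real \<Rightarrow> real \<Rightarrow> real \<Rightarrow> real" where
  "lam_s \<delta> ds dx = - deriv (\<lambda>t. Rfun \<delta> t dx) ds"

definition lam_x :: "real \<Rightarrow> real \<Rightarrow> real \<Rightarrow> real" where
  "lam_x \<delta> ds dx = - deriv (\<lambda>t. Rfun \<delta> ds t) dx"

definition jX :: "real \<Rightarrow> chan \<Rightarrow> sym \<Rightarrow> real \<Rightarrow> real \<Rightarrow> real" where
  "jX \<delta> W x ds dx = - ln (\<Sum>zy\<in>UNIV. out_marg \<delta> W zy *
      exp (lam_s \<delta> ds dx * ds + lam_x \<delta> ds dx * dx
           - lam_s \<delta> ds dx * dbar_s x (fst zy) - lam_x \<delta> ds dx * d_x x (snd zy)))"

end

theory Submission
  imports Defs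
begin

text \<open>
  Write \<lambda>s, \<lambda>x for the multipliers. On D_in the pair (-\<lambda>s, -\<lambda>x) is the unique subgradient of the
  convex function R at (ds, dx): every slope between the one-sided partial derivatives extends to a
  subgradient, and two distinct subgradients would force the support of the output marginal of the
  minimizer W into a degenerate shape (Z constant, Y constant, Y = Z or Y = not Z), each of which
  keeps R flat when relaxing a constraint that every minimizer meets with equality.
  Hence W minimizes the Lagrangian I(X;Z,Y) + \<lambda>s E[dbar_s] + \<lambda>x E[d_x], so it is the tilted
  channel of its output marginal Q, and optimality in Q gives
  E[exp(j_X(X) + \<lambda>s (ds - dbar_s(X,z)) + \<lambda>x (dx - d_x(X,y)))] \<le> 1 for every (z, y).
  For a code, flipping the erased source bits at the positions where Z_i = 1 preserves the joint law
  and turns d_s(S_i,Z_i) - dbar_s(X_i,Z_i) into d_s(S_i,0) - dbar_s(X_i,0). Off the error event the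
  distortion constraints only add nonnegative slack, and a Chernoff bound summed over the M codewords
  leaves the excess probability exp(-\<gamma>).
\<close>

section \<open>Relative entropy and finite distributions\<close>

lemma ln_diff_ge_one_minus_div:
  fixes a c :: real
  assumes "0 < a" "0 < c"
  shows "1 - c / a \<le> ln a - ln c"
proof -
  have "ln (c / a) \<le> c / a - 1" using assms by (intro ln_le_minus_one) simp
  then show ?thesis using assms by (simp add: ln_div)
qed

lemma div_one_plus_le_ln: "0 < 1 + y \<Longrightarrow> y / (1 + y) \<le> ln (1 + y)" for y :: real
  using ln_diff_ge_one_minus_div[of "1 + y" 1] by (simp add: field_simps)

lemma log_sum_inequality:
  fixes u w :: "'i \<Rightarrow> real"
  assumes fin: "finite I" and u0: "\<And>i. i \<in> I \<Longrightarrow> 0 \<le> u i" and w0: "\<And>i. i \<in> I \<Longrightarrow> 0 \<le> w i"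
    and uw: "\<And>i. i \<in> I \<Longrightarrow> 0 < u i \<Longrightarrow> 0 < w i"
  shows "(\<Sum>i\<in>I. u i) * ln ((\<Sum>i\<in>I. u i) / (\<Sum>i\<in>I. w i)) \<le> (\<Sum>i\<in>I. u i * ln (u i / w i))"
proof (cases "(\<Sum>i\<in>I. u i) = 0")
  case True
  then have "\<forall>i\<in>I. u i = 0" using sum_nonneg_eq_0_iff[OF fin] u0 by blast
  then show ?thesis using True by simp
next
  case False
  define U where "U = (\<Sum>i\<in>I. u i)"
  define V where "V = (\<Sum>i\<in>I. w i)"
  have U: "0 < U" using False u0 sum_nonneg[of I u] unfolding U_def by force
  obtain j where j: "j \<in> I" "0 < u j"
    using False u0 by (metis (no_types, lifting) order_le_less sum.neutral)
  have "w j \<le> V" unfolding V_def using fin j w0 by (intro member_le_sum) auto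
  then have V: "0 < V" using uw[OF j] by simp
  have termwise: "u i * ln (U / V) + u i - w i * U / V \<le> u i * ln (u i / w i)" if i: "i \<in> I" for i
  proof (cases "u i = 0")
    case True then show ?thesis using w0[OF i] U V by simp
  next
    case False
    then have ui: "0 < u i" using u0[OF i] by simp
    have wi: "0 < w i" using uw[OF i ui] .
    have "1 - (U / V) / (u i / w i) \<le> ln (u i / w i) - ln (U / V)"
      by (rule ln_diff_ge_one_minus_div) (use ui wi U V in auto)
    then have "u i * (1 - (U / V) / (u i / w i)) \<le> u i * (ln (u i / w i) - ln (U / V))"
      using ui by (intro mult_left_mono) auto
    moreover have "u i * (1 - (U / V) / (u i / w i)) = u i - w i * U / V"
      using ui wi V by (simp add: field_simps)
    ultimately show ?thesis by (simp add: algebra_simps)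
  qed
  have "(\<Sum>i\<in>I. u i * ln (U / V) + u i - w i * U / V) = U * ln (U / V) + U - V * U / V"
    unfolding U_def V_def by (simp add: sum.distrib sum_subtractf sum_distrib_right sum_divide_distrib)
  then have "U * ln (U / V) = (\<Sum>i\<in>I. u i * ln (U / V) + u i - w i * U / V)"
    using V by simp
  also have "\<dots> \<le> (\<Sum>i\<in>I. u i * ln (u i / w i))"
    by (rule sum_mono) (use termwise in auto)
  finally show ?thesis unfolding U_def V_def .
qed

lemma kl_divergence_nonneg:
  fixes p q :: "'a::finite \<Rightarrow> real"
  assumes "\<And>i. 0 \<le> p i" "\<And>i. 0 \<le> q i" "\<And>i. 0 < p i \<Longrightarrow> 0 < q i"
    and "(\<Sum>i\<in>UNIV. p i) = 1" "(\<Sum>i\<in>UNIV. q i) = 1"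
  shows "0 \<le> (\<Sum>i\<in>UNIV. p i * ln (p i / q i))"
  using log_sum_inequality[of UNIV p q] assms by simp

lemma kl_divergence_le_0_imp_eq:
  fixes p q :: "'a::finite \<Rightarrow> real"
  assumes p0: "\<And>i. 0 \<le> p i" and q0: "\<And>i. 0 \<le> q i" and pq: "\<And>i. 0 < p i \<Longrightarrow> 0 < q i"
    and sp: "(\<Sum>i\<in>UNIV. p i) = 1" and sq: "(\<Sum>i\<in>UNIV. q i) = 1"
    and kl: "(\<Sum>i\<in>UNIV. p i * ln (p i / q i)) \<le> 0"
  shows "p = q"
proof
  fix i
  define t where "t = (\<lambda>i. p i * ln (p i / q i) - (p i - q i))"
  have t0: "0 \<le> t i" for i
  proof (cases "p i = 0")
    case True then show ?thesis using q0[of i] by (simp add: t_def)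
  next
    case False
    then have pi: "0 < p i" using p0[of i] by simp
    have qi: "0 < q i" using pq[OF pi] .
    have "p i * (1 - q i / p i) \<le> p i * (ln (p i) - ln (q i))"
      using pi qi ln_diff_ge_one_minus_div[of "p i" "q i"] by (intro mult_left_mono) auto
    moreover have "p i * (1 - q i / p i) = p i - q i" using pi by (simp add: field_simps)
    ultimately show ?thesis using pi qi by (simp add: t_def ln_div)
  qed
  have "(\<Sum>i\<in>UNIV. t i) = (\<Sum>i\<in>UNIV. p i * ln (p i / q i)) - (\<Sum>i\<in>UNIV. p i) + (\<Sum>i\<in>UNIV. q i)"
    by (simp add: t_def sum_subtractf sum.distrib)
  also have "\<dots> \<le> 0" using kl sp sq by simp
  finally have "(\<Sum>i\<in>UNIV. t i) = 0" using sum_nonneg[of UNIV t] t0 by force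
  then have ti: "t i = 0" using sum_nonneg_eq_0_iff[of UNIV t] t0 by auto
  show "p i = q i"
  proof (cases "p i = 0")
    case True then show ?thesis using ti by (simp add: t_def)
  next
    case False
    then have pi: "0 < p i" using p0[of i] by simp
    have qi: "0 < q i" by (rule pq[OF pi])
    have "ln (p i / q i) = 1 - q i / p i" using ti pi by (simp add: t_def field_simps)
    then have "ln (q i / p i) = q i / p i - 1" using pi qi by (simp add: ln_div)
    then have "q i / p i = 1" using pi qi by (intro ln_eq_minus_one) auto
    then show ?thesis using pi by simp
  qed
qed

lemma sum_pmf_UNIV [simp]: "(\<Sum>r\<in>(UNIV::'a::finite set). pmf p r) = 1"
  by (simp add: sum_pmf_eq_1)

lemma pmf_embed_pmf_finite:
  fixes f :: "'a::finite \<Rightarrow> real"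
  assumes "\<And>x. 0 \<le> f x" "(\<Sum>x\<in>UNIV. f x) = 1"
  shows "pmf (embed_pmf f) x = f x"
proof (rule pmf_embed_pmf)
  show "(\<integral>\<^sup>+x. ennreal (f x) \<partial>count_space UNIV) = 1"
    using assms by (simp add: nn_integral_count_space_finite sum_ennreal[symmetric])
qed fact

lemma pmf_map_pmf_finite:
  fixes f :: "'a::finite \<Rightarrow> 'b"
  shows "pmf (map_pmf f p) y = (\<Sum>r\<in>{r. f r = y}. pmf p r)"
  by (simp add: pmf_map measure_measure_pmf_finite vimage_def)

lemma sum_pmf_map_pmf_finite:
  fixes f :: "'a::finite \<Rightarrow> 'b::finite"
  shows "(\<Sum>y\<in>UNIV. pmf (map_pmf f p) y * g y) = (\<Sum>r\<in>UNIV. pmf p r * g (f r))"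
proof -
  have "(\<Sum>y\<in>UNIV. pmf (map_pmf f p) y * g y) = (\<Sum>y\<in>UNIV. \<Sum>r\<in>{r. f r = y}. pmf p r * g (f r))"
    by (intro sum.cong refl) (simp add: pmf_map_pmf_finite sum_distrib_right)
  also have "\<dots> = (\<Sum>r\<in>UNIV. pmf p r * g (f r))"
    using sum.group[of UNIV UNIV f "\<lambda>r. pmf p r * g (f r)"] by simp
  finally show ?thesis .
qed

lemma nn_integral_swap_pmf:
  fixes A :: "'a pmf" and B :: "'b pmf"
  shows "(\<integral>\<^sup>+x. \<integral>\<^sup>+y. f x y \<partial>B \<partial>A) = (\<integral>\<^sup>+y. \<integral>\<^sup>+x. f x y \<partial>A \<partial>B)"
proof -
  have "(\<integral>\<^sup>+x. \<integral>\<^sup>+y. f x y \<partial>B \<partial>A) = (\<integral>\<^sup>+p. f (fst p) (snd p) \<partial>pair_pmf A B)"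
    by (simp add: nn_integral_pair_pmf')
  also have "\<dots> = (\<integral>\<^sup>+q. f (snd q) (fst q) \<partial>pair_pmf B A)"
    by (subst pair_commute_pmf) (simp add: case_prod_beta)
  also have "\<dots> = (\<integral>\<^sup>+y. \<integral>\<^sup>+x. f x y \<partial>A \<partial>B)"
    by (simp add: nn_integral_pair_pmf')
  finally show ?thesis .
qed

lemma measure_pmf_exp_tail_le:
  fixes p :: "'a pmf"
  assumes "(\<integral>\<^sup>+w. ennreal (exp (f w)) \<partial>p) \<le> ennreal B" and "0 \<le> B"
  shows "measure_pmf.prob p {w. c \<le> f w} \<le> exp (- c) * B"
proof -
  have "indicator {w. c \<le> f w} w \<le> ennreal (exp (- c)) * ennreal (exp (f w))" for w
    by (auto simp: indicator_def ennreal_mult[symmetric] exp_minus_inverse exp_add[symmetric]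
        simp flip: exp_add intro!: ennreal_leI)
  then have "emeasure p {w. c \<le> f w} \<le> (\<integral>\<^sup>+w. ennreal (exp (- c)) * ennreal (exp (f w)) \<partial>p)"
    by (simp add: nn_integral_mono flip: nn_integral_indicator)
  also have "\<dots> = ennreal (exp (- c)) * (\<integral>\<^sup>+w. ennreal (exp (f w)) \<partial>p)"
    by (rule nn_integral_cmult) simp
  also have "\<dots> \<le> ennreal (exp (- c) * B)"
    using assms by (metis ennreal_mult' exp_ge_zero mult_left_mono zero_le)
  finally show ?thesis using assms(2) by (simp add: measure_pmf.emeasure_eq_measure)
qed

lemma sum_sym: "(\<Sum>x\<in>UNIV. g x) = g None + g (Some False) + g (Some True)"
  for g :: "sym \<Rightarrow> 'b::comm_monoid_add"
  by (simp add: UNIV_option_conv UNIV_bool add.assoc)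

lemma sum_bool_sym:
  "(\<Sum>r\<in>UNIV. g r) = g (False, None) + g (False, Some False) + g (False, Some True)
     + g (True, None) + g (True, Some False) + g (True, Some True)"
  for g :: "bool \<times> sym \<Rightarrow> 'b::comm_monoid_add"
  by (simp add: UNIV_Times_UNIV[symmetric] UNIV_option_conv UNIV_bool add.assoc del: UNIV_Times_UNIV)

lemma measure_bernoulli_pmf:
  assumes "0 \<le> p" "p \<le> 1"
  shows "measure_pmf.prob (bernoulli_pmf p) A = (if True \<in> A then p else 0) + (if False \<in> A then 1 - p else 0)"
proof -
  have "measure_pmf.prob (bernoulli_pmf p) A = (\<Sum>x\<in>A. pmf (bernoulli_pmf p) x)"
    by (rule measure_measure_pmf_finite) simp
  also have "\<dots> = (\<Sum>x\<in>A \<inter> {True}. pmf (bernoulli_pmf p) x) + (\<Sum>x\<in>A \<inter> {False}. pmf (bernoulli_pmf p) x)"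
    by (subst sum.union_disjoint[symmetric]) (auto intro: sum.cong)
  finally show ?thesis using assms by (auto simp: Int_insert_right)
qed

section \<open>One-sided derivatives and subgradients of convex functions\<close>

locale convex_halfline_point =
  fixes g :: "real \<Rightarrow> real" and lo x0 :: real
  assumes convex: "convex_on {lo..} g" and lo_less: "lo < x0"
begin

definition right_slope :: "real \<Rightarrow> real" where "right_slope h = (g (x0 + h) - g x0) / h"
definition left_slope :: "real \<Rightarrow> real" where "left_slope h = (g x0 - g (x0 - h)) / h"

definition right_deriv :: real where "right_deriv = Inf (right_slope ` {0<..})"
definition left_deriv :: real where "left_deriv = Sup (left_slope ` {0<..x0 - lo})"

lemma right_slope_mono: "0 < h \<Longrightarrow> h \<le> h' \<Longrightarrow> right_slope h \<le> right_slope h'"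
  using convex_on_slope_le(1)[OF convex, of x0 "x0 + h'" "x0 + h"] lo_less
  by (cases "h = h'") (auto simp: right_slope_def field_simps)

lemma left_slope_antimono: "0 < h \<Longrightarrow> h \<le> h' \<Longrightarrow> h' \<le> x0 - lo \<Longrightarrow> left_slope h' \<le> left_slope h"
  using convex_on_slope_le(2)[OF convex, of "x0 - h'" x0 "x0 - h"] lo_less
  by (cases "h = h'") (auto simp: left_slope_def field_simps)

lemma left_slope_le_right_slope: "0 < h' \<Longrightarrow> h' \<le> x0 - lo \<Longrightarrow> 0 < h \<Longrightarrow> left_slope h' \<le> right_slope h"
proof -
  assume h: "0 < h'" "h' \<le> x0 - lo" "0 < h"
  have "(g (x0 - h') - g x0) / (x0 - h' - x0) \<le> (g (x0 - h') - g (x0 + h)) / (x0 - h' - (x0 + h))"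
    using convex_on_slope_le(1)[OF convex, of "x0 - h'" "x0 + h" x0] h by simp
  also have "\<dots> \<le> (g x0 - g (x0 + h)) / (x0 - (x0 + h))"
    using convex_on_slope_le(2)[OF convex, of "x0 - h'" "x0 + h" x0] h by simp
  finally show ?thesis unfolding left_slope_def right_slope_def
    by (smt (verit, ccfv_SIG) minus_divide_divide)
qed

lemma bdd_below_right_slope: "bdd_below (right_slope ` {0<..})"
  using left_slope_le_right_slope[of "x0 - lo"] lo_less
  by (intro bdd_belowI[of _ "left_slope (x0 - lo)"]) auto

lemma bdd_above_left_slope: "bdd_above (left_slope ` {0<..x0 - lo})"
  using left_slope_le_right_slope[of _ 1] by (intro bdd_aboveI[of _ "right_slope 1"]) auto

lemma right_deriv_le: "0 < h \<Longrightarrow> right_deriv \<le> right_slope h"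
  unfolding right_deriv_def using bdd_below_right_slope by (intro cInf_lower) auto

lemma left_deriv_ge: "0 < h \<Longrightarrow> h \<le> x0 - lo \<Longrightarrow> left_slope h \<le> left_deriv"
  unfolding left_deriv_def using bdd_above_left_slope by (intro cSup_upper) auto

lemma left_deriv_le_right_deriv: "left_deriv \<le> right_deriv"
  unfolding left_deriv_def right_deriv_def
  using lo_less left_slope_le_right_slope
  by (intro cSup_least cInf_greatest) auto

lemma supporting_line:
  assumes "left_deriv \<le> c" "c \<le> right_deriv" "lo \<le> x0 + t"
  shows "g x0 + c * t \<le> g (x0 + t)"
proof (cases t "0::real" rule: linorder_cases)
  case less
  have "left_slope (- t) \<le> c" using left_deriv_ge[of "- t"] less assms by simp
  then have "- c \<le> (g x0 - g (x0 + t)) / t" using less by (simp add: left_slope_def)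
  then have "(g x0 - g (x0 + t)) / t * t \<le> - c * t" using less by (intro mult_right_mono_neg) auto
  then show ?thesis using less by simp
next
  case greater
  have "c \<le> right_slope t" using right_deriv_le[OF greater] assms by simp
  then show ?thesis using greater by (simp add: right_slope_def le_divide_eq)
qed simp

lemma has_real_derivative_if_left_deriv_eq:
  assumes "left_deriv = right_deriv"
  shows "(g has_real_derivative right_deriv) (at x0)"
  unfolding DERIV_def LIM_eq
proof (intro allI impI)
  fix e :: real assume e: "0 < e"
  obtain h1 where h1: "0 < h1" "right_slope h1 < right_deriv + e"
    using cInf_less_iff[of "right_slope ` {0<..}" "right_deriv + e"] bdd_below_right_slope e
    unfolding right_deriv_def by auto
  obtain h2 where h2: "0 < h2" "h2 \<le> x0 - lo" "left_deriv - e < left_slope h2"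
    using less_cSup_iff[of "left_slope ` {0<..x0 - lo}" "left_deriv - e"] bdd_above_left_slope e lo_less
    unfolding left_deriv_def by auto
  have "\<bar>(g (x0 + t) - g x0) / t - right_deriv\<bar> < e" if t: "t \<noteq> 0" "\<bar>t\<bar> < min h1 h2" for t
  proof (cases "0 < t")
    case True
    then show ?thesis using right_slope_mono[of t h1] right_deriv_le[of t] h1 t
      by (simp add: right_slope_def)
  next
    case False
    then have "0 < - t" using t by simp
    moreover have "left_slope (- t) = (g (x0 + t) - g x0) / t"
      unfolding left_slope_def by (smt (verit, ccfv_SIG) minus_divide_divide)
    ultimately show ?thesis
      using left_slope_antimono[of "- t" h2] left_deriv_ge[of "- t"] h2 t assms by simp
  qed
  then show "\<exists>s>0. \<forall>t. t \<noteq> 0 \<and> norm (t - 0) < s \<longrightarrow> norm ((g (x0 + t) - g x0) / t - right_deriv) < e"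
    using h1 h2 by (intro exI[of _ "min h1 h2"]) auto
qed

end

lemma convex_strict_epigraph:
  assumes "convex U" "convex_on U f"
  shows "convex {(q, r). q \<in> U \<and> f q < r}"
  unfolding convex_def
proof (clarsimp)
  fix q1 r1 q2 r2 and u v :: real
  assume q: "q1 \<in> U" "f q1 < r1" "q2 \<in> U" "f q2 < r2" and uv: "0 \<le> u" "0 \<le> v" "u + v = 1"
  have "f (u *\<^sub>R q1 + v *\<^sub>R q2) \<le> u * f q1 + v * f q2"
    using assms(2) q uv unfolding convex_on_def by blast
  also have "\<dots> < u * r1 + v * r2"
  proof (cases "u = 0")
    case False
    then have "u * f q1 < u * r1" using q uv by simp
    moreover have "v * f q2 \<le> v * r2" using q uv by (intro mult_left_mono) auto
    ultimately show ?thesis by simp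
  qed (use uv q in simp)
  finally show "u *\<^sub>R q1 + v *\<^sub>R q2 \<in> U \<and> f (u *\<^sub>R q1 + v *\<^sub>R q2) < u * r1 + v * r2"
    using assms(1) q uv unfolding convex_def by blast
qed

lemma convex_line:
  fixes p d :: "'a::real_normed_vector"
  shows "convex (range (\<lambda>t::real. (p + t *\<^sub>R d, c + a * t)))"
proof -
  have "range (\<lambda>t::real. (p + t *\<^sub>R d, c + a * t)) = (+) (p, c) ` range (\<lambda>t. t *\<^sub>R (d, a))"
    by (simp add: image_image algebra_simps)
  moreover have "convex (range (\<lambda>t::real. t *\<^sub>R (d, a)))"
    by (rule convex_linear_image[OF bounded_linear.linear[OF bounded_linear_scaleR_left] convex_UNIV])
  ultimately show ?thesis by (simp add: convex_translation)
qed

lemma separating_hyperplane_nonvertical: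
  fixes f :: "'a::euclidean_space \<Rightarrow> real"
  assumes p: "p \<in> interior U" and c: "(cq, c3) \<noteq> 0"
    and below: "\<And>q r. q \<in> U \<Longrightarrow> f q < r \<Longrightarrow> inner cq q + c3 * r \<le> b"
    and above: "b \<le> inner cq p + c3 * f p"
  shows "c3 < 0"
proof -
  have pU: "p \<in> U" using p interior_subset by blast
  have "\<not> 0 < c3"
  proof
    assume c3: "0 < c3"
    define r where "r = f p + 1 + \<bar>b - inner cq p\<bar> / c3"
    have "inner cq p + c3 * r \<le> b" using below[OF pU, of r] c3 by (simp add: r_def add_pos_nonneg)
    moreover have "c3 * r = c3 * (f p + 1) + \<bar>b - inner cq p\<bar>" using c3 by (simp add: r_def algebra_simps)
    ultimately show False using above c3 by (smt (verit) mult_strict_left_mono)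
  qed
  moreover have "c3 \<noteq> 0"
  proof
    assume c3: "c3 = 0"
    then have cq: "cq \<noteq> 0" using c by (simp add: zero_prod_def)
    obtain e where e: "0 < e" "ball p e \<subseteq> U" using p mem_interior by blast
    define q where "q = p + (e / (2 * norm cq)) *\<^sub>R cq"
    have "dist p q < e" using e cq by (simp add: q_def dist_norm)
    then have "q \<in> U" using e by auto
    then have "inner cq q \<le> inner cq p" using below[of q "f q + 1"] above c3 by simp
    moreover have "inner cq q = inner cq p + (e / (2 * norm cq)) * (norm cq)\<^sup>2"
      by (simp add: q_def inner_add_right power2_norm_eq_inner)
    moreover have "0 < (e / (2 * norm cq)) * (norm cq)\<^sup>2" using e cq by simp
    ultimately show False by linarith
  qed
  ultimately show ?thesis by linarith
qed

lemma separating_hyperplane_epigraph_line: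
  fixes f :: "'a::euclidean_space \<Rightarrow> real"
  assumes U: "convex U" and f: "convex_on U f" and p: "p \<in> U"
    and line: "\<And>t. p + t *\<^sub>R d \<in> U \<Longrightarrow> f p + a * t \<le> f (p + t *\<^sub>R d)"
  obtains cq c3 b where "(cq, c3) \<noteq> 0"
    and "\<And>q r. q \<in> U \<Longrightarrow> f q < r \<Longrightarrow> inner cq q + c3 * r \<le> b"
    and "\<And>t. b \<le> inner cq p + c3 * f p + t * (inner cq d + c3 * a)"
proof -
  define S where "S = {(q, r). q \<in> U \<and> f q < r}"
  define T where "T = range (\<lambda>t::real. (p + t *\<^sub>R d, f p + a * t))"
  have "S \<noteq> {}" using p by (auto simp: S_def intro: gt_ex)
  moreover have "T \<noteq> {}" by (simp add: T_def)
  moreover have "S \<inter> T = {}"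
  proof (rule ccontr)
    assume "S \<inter> T \<noteq> {}"
    then obtain t where "p + t *\<^sub>R d \<in> U" "f (p + t *\<^sub>R d) < f p + a * t" by (auto simp: S_def T_def)
    then show False using line by force
  qed
  moreover have "convex S" "convex T"
    unfolding S_def T_def by (rule convex_strict_epigraph[OF U f], rule convex_line)
  ultimately obtain c b where "c \<noteq> 0" "\<forall>x\<in>S. inner c x \<le> b" "\<forall>x\<in>T. b \<le> inner c x"
    using separating_hyperplane_sets by metis
  then show thesis
    by (intro that[of "fst c" "snd c" b]) (auto simp: S_def T_def inner_prod_def algebra_simps)
qed

lemma supporting_line_extends_to_subgradient:
  fixes f :: "'a::euclidean_space \<Rightarrow> real"
  assumes U: "convex U" and f: "convex_on U f" and p: "p \<in> interior U"
    and line: "\<And>t. p + t *\<^sub>R d \<in> U \<Longrightarrow> f p + a * t \<le> f (p + t *\<^sub>R d)"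
  obtains v where "inner v d = a" "\<And>q. q \<in> U \<Longrightarrow> f p + inner v (q - p) \<le> f q"
proof -
  obtain cq c3 b where c: "(cq, c3) \<noteq> 0" and below: "\<And>q r. q \<in> U \<Longrightarrow> f q < r \<Longrightarrow> inner cq q + c3 * r \<le> b"
    and on_line: "\<And>t. b \<le> inner cq p + c3 * f p + t * (inner cq d + c3 * a)"
    using separating_hyperplane_epigraph_line[OF U f interior_subset[THEN subsetD, OF p] line] by blast
  have slope: "inner cq d + c3 * a = 0"
  proof (rule ccontr)
    assume m: "inner cq d + c3 * a \<noteq> 0"
    show False using on_line[of "(b - inner cq p - c3 * f p - 1) / (inner cq d + c3 * a)"] m by simp
  qed
  have above: "b \<le> inner cq p + c3 * f p" using on_line[of 0] by simp
  have c3: "c3 < 0" by (rule separating_hyperplane_nonvertical[where f = f, OF p c below above])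
  define v where "v = (1 / (- c3)) *\<^sub>R cq"
  show thesis
  proof
    show "inner v d = a" using slope c3 by (simp add: v_def field_simps)
    fix q assume q: "q \<in> U"
    have "f p + inner v (q - p) \<le> r" if "f q < r" for r
    proof -
      have "c3 * (r - f p) \<le> - inner cq (q - p)"
        using below[OF q that] above by (simp add: inner_diff_right algebra_simps)
      then show ?thesis using c3 by (simp add: v_def field_simps)
    qed
    then show "f p + inner v (q - p) \<le> f q" by (rule dense_ge)
  qed
qed

section \<open>Test channels and the rate-distortion function\<close>

definition mix_chan :: "real \<Rightarrow> chan \<Rightarrow> chan \<Rightarrow> chan" where
  "mix_chan t V1 V2 = (\<lambda>x. embed_pmf (\<lambda>r. t * pmf (V1 x) r + (1 - t) * pmf (V2 x) r))"

lemma pmf_mix_chan: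
  assumes "0 \<le> t" "t \<le> 1"
  shows "pmf (mix_chan t V1 V2 x) r = t * pmf (V1 x) r + (1 - t) * pmf (V2 x) r"
  unfolding mix_chan_def
  by (rule pmf_embed_pmf_finite) (use assms in \<open>auto simp: sum.distrib sum_distrib_left[symmetric]\<close>)

definition const_chan :: "bool \<times> sym \<Rightarrow> chan" where
  "const_chan r0 = (\<lambda>x. return_pmf r0)"

definition lossless_chan :: chan where
  "lossless_chan = (\<lambda>x. return_pmf (case x of None \<Rightarrow> False | Some b \<Rightarrow> b, x))"

locale efcf_source =
  fixes \<delta> :: real
  assumes erasure_prob_nonneg: "0 \<le> \<delta>" and erasure_prob_le_1: "\<delta> \<le> 1"
begin

abbreviation PX :: "sym \<Rightarrow> real" where "PX x \<equiv> pmf (efcfX \<delta>) x"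

lemma pmf_efcf:
  "pmf (efcf \<delta>) (s, x) = (case x of None \<Rightarrow> \<delta> / 2 | Some b \<Rightarrow> if b = s then (1 - \<delta>) / 2 else 0)"
proof -
  have "efcf \<delta> = bind_pmf (bernoulli_pmf (1/2)) (\<lambda>s. map_pmf (\<lambda>er. (s, if er then None else Some s)) (bernoulli_pmf \<delta>))"
    unfolding efcf_def map_pmf_def by (simp add: bind_assoc_pmf bind_return_pmf)
  then show ?thesis using erasure_prob_nonneg erasure_prob_le_1
    by (cases s) (auto simp: pmf_bind pmf_map measure_bernoulli_pmf vimage_def split: option.splits if_splits)
qed

lemma PX_None [simp]: "PX None = \<delta>"
  and PX_Some [simp]: "PX (Some b) = (1 - \<delta>) / 2"
proof -
  have "efcfX \<delta> = bind_pmf (bernoulli_pmf (1/2)) (\<lambda>s. map_pmf (\<lambda>er. if er then None else Some s) (bernoulli_pmf \<delta>))"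
    unfolding efcfX_def efcf_def map_pmf_def by (simp add: bind_assoc_pmf bind_return_pmf)
  then show "PX None = \<delta>" "PX (Some b) = (1 - \<delta>) / 2" using erasure_prob_nonneg erasure_prob_le_1
    by (auto simp: pmf_bind pmf_map measure_bernoulli_pmf vimage_def)
qed

lemma out_marg_nonneg: "0 \<le> out_marg \<delta> V r"
  unfolding out_marg_def by (intro sum_nonneg mult_nonneg_nonneg) auto

lemma sum_out_marg: "(\<Sum>r\<in>UNIV. out_marg \<delta> V r) = 1"
  unfolding out_marg_def by (subst sum.swap) (simp add: sum_distrib_left[symmetric])

lemma out_marg_ge: "PX x * pmf (V x) r \<le> out_marg \<delta> V r"
  unfolding out_marg_def by (rule member_le_sum[where f = "\<lambda>x. PX x * pmf (V x) r"]) auto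

lemma out_marg_pos: "0 < PX x \<Longrightarrow> 0 < pmf (V x) r \<Longrightarrow> 0 < out_marg \<delta> V r"
  using out_marg_ge[of x V r] by (smt (verit) mult_pos_pos)

lemma MI_map_pmf_le: "MI \<delta> (\<lambda>x. map_pmf f (V x)) \<le> MI \<delta> V"
proof -
  let ?V' = "\<lambda>x. map_pmf f (V x)"
  have out': "out_marg \<delta> ?V' y = (\<Sum>r\<in>{r. f r = y}. out_marg \<delta> V r)" for y
    unfolding out_marg_def pmf_map_pmf_finite by (subst sum.swap) (simp add: sum_distrib_left)
  have fibre: "PX x * pmf (?V' x) y * ln (pmf (?V' x) y / out_marg \<delta> ?V' y)
      \<le> (\<Sum>r\<in>{r. f r = y}. PX x * pmf (V x) r * ln (pmf (V x) r / out_marg \<delta> V r))" for x y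
  proof (cases "PX x = 0")
    case False
    then have px: "0 < PX x" using pmf_nonneg[of "efcfX \<delta>" x] by linarith
    have "(\<Sum>r\<in>{r. f r = y}. PX x * pmf (V x) r)
          * ln ((\<Sum>r\<in>{r. f r = y}. PX x * pmf (V x) r) / (\<Sum>r\<in>{r. f r = y}. PX x * out_marg \<delta> V r))
        \<le> (\<Sum>r\<in>{r. f r = y}. PX x * pmf (V x) r * ln (PX x * pmf (V x) r / (PX x * out_marg \<delta> V r)))"
      by (rule log_sum_inequality) (use px out_marg_nonneg out_marg_pos in \<open>auto simp: zero_less_mult_iff\<close>)
    then show ?thesis
      using px by (simp add: pmf_map_pmf_finite out' sum_distrib_left[symmetric])
  qed simp
  have "MI \<delta> ?V' \<le> (\<Sum>x\<in>UNIV. \<Sum>y\<in>UNIV. \<Sum>r\<in>{r. f r = y}. PX x * pmf (V x) r * ln (pmf (V x) r / out_marg \<delta> V r))"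
    unfolding MI_def by (intro sum_mono fibre)
  also have "\<dots> = MI \<delta> V"
    unfolding MI_def by (rule sum.cong[OF refl]) (use sum.group[of UNIV UNIV f] in simp)
  finally show ?thesis .
qed

lemma MI_const_chan: "MI \<delta> (const_chan r0) = 0"
proof -
  have "out_marg \<delta> (const_chan r0) r = pmf (return_pmf r0) r" for r
    unfolding out_marg_def const_chan_def by (simp add: sum_distrib_right[symmetric])
  then show ?thesis unfolding MI_def by (auto simp: const_chan_def indicator_def intro!: sum.neutral)
qed

lemma MI_nonneg: "0 \<le> MI \<delta> V"
  using MI_map_pmf_le[of "\<lambda>_. (False, None)" V] MI_const_chan
  by (simp add: map_pmf_const const_chan_def)

lemma Eds_map_pmf:
  fixes f :: "bool \<times> sym \<Rightarrow> bool \<times> sym"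
  shows "Eds \<delta> (\<lambda>x. map_pmf f (V x)) = (\<Sum>x\<in>UNIV. PX x * (\<Sum>r\<in>UNIV. pmf (V x) r * dbar_s x (fst (f r))))"
proof -
  have "(\<Sum>zy\<in>UNIV. pmf (map_pmf f (V x)) zy * dbar_s x (fst zy)) = (\<Sum>r\<in>UNIV. pmf (V x) r * dbar_s x (fst (f r)))" for x
    using sum_pmf_map_pmf_finite[where f = f and p = "V x" and g = "\<lambda>zy. dbar_s x (fst zy)"] by simp
  then show ?thesis unfolding Eds_def by simp
qed

lemma Edx_map_pmf:
  fixes f :: "bool \<times> sym \<Rightarrow> bool \<times> sym"
  shows "Edx \<delta> (\<lambda>x. map_pmf f (V x)) = (\<Sum>x\<in>UNIV. PX x * (\<Sum>r\<in>UNIV. pmf (V x) r * d_x x (snd (f r))))"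
proof -
  have "(\<Sum>zy\<in>UNIV. pmf (map_pmf f (V x)) zy * d_x x (snd zy)) = (\<Sum>r\<in>UNIV. pmf (V x) r * d_x x (snd (f r)))" for x
    using sum_pmf_map_pmf_finite[where f = f and p = "V x" and g = "\<lambda>zy. d_x x (snd zy)"] by simp
  then show ?thesis unfolding Edx_def by simp
qed

lemma Dadm_iff: "(a, b) \<in> Dadm \<delta> \<longleftrightarrow> \<delta> / 2 \<le> a \<and> 0 \<le> b"
proof -
  have "Min (range (d_x x)) = 0" for x
    by (rule Min_eqI) (auto simp: d_x_def image_iff intro: exI[of _ x])
  then show ?thesis unfolding Dadm_def by (simp add: sum_sym dbar_s_def)
qed

lemma convex_Dadm: "convex (Dadm \<delta>)"
proof -
  have "Dadm \<delta> = {\<delta>/2..} \<times> {0..}" by (auto simp: Dadm_iff)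
  then show ?thesis by (simp add: convex_Times)
qed

lemma Eds_ge: "\<delta> / 2 \<le> Eds \<delta> V"
proof -
  have "\<delta> / 2 = (\<Sum>x\<in>UNIV. PX x * (\<Sum>r\<in>UNIV. pmf (V x) r * (if x = None then 1/2 else 0)))"
    by (simp add: sum_sym sum_distrib_right[symmetric])
  also have "\<dots> \<le> Eds \<delta> V" unfolding Eds_def
    by (intro sum_mono mult_left_mono) (auto simp: dbar_s_def split: option.splits)
  finally show ?thesis .
qed

lemma Edx_nonneg: "0 \<le> Edx \<delta> V"
  unfolding Edx_def by (intro sum_nonneg mult_nonneg_nonneg) (auto simp: d_x_def)

lemma distortions_in_Dadm: "(Eds \<delta> V, Edx \<delta> V) \<in> Dadm \<delta>"
  using Eds_ge Edx_nonneg Dadm_iff by simp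

lemma feasible_lossless_chan: "(a, b) \<in> Dadm \<delta> \<Longrightarrow> feasible \<delta> a b lossless_chan"
  unfolding feasible_def Eds_def Edx_def lossless_chan_def
  by (simp add: sum_sym sum_bool_sym dbar_s_def d_x_def Dadm_iff)

lemma bdd_below_MI: "bdd_below {MI \<delta> W | W. feasible \<delta> a b W}"
  by (rule bdd_belowI[of _ 0]) (auto simp: MI_nonneg)

lemma Rfun_le_MI: "feasible \<delta> a b V \<Longrightarrow> Rfun \<delta> a b \<le> MI \<delta> V"
  unfolding Rfun_def by (rule cInf_lower) (auto intro: bdd_below_MI)

lemma Rfun_nonneg: "(a, b) \<in> Dadm \<delta> \<Longrightarrow> 0 \<le> Rfun \<delta> a b"
  unfolding Rfun_def by (rule cInf_greatest) (auto simp: MI_nonneg dest: feasible_lossless_chan)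

lemma Rfun_approx:
  assumes "(a, b) \<in> Dadm \<delta>" "0 < e"
  obtains V where "feasible \<delta> a b V" "MI \<delta> V < Rfun \<delta> a b + e"
proof -
  have ne: "{MI \<delta> W | W. feasible \<delta> a b W} \<noteq> {}" using feasible_lossless_chan[OF assms(1)] by auto
  have "\<exists>y\<in>{MI \<delta> W | W. feasible \<delta> a b W}. y < Rfun \<delta> a b + e"
    using cInf_less_iff[OF ne bdd_below_MI, of "Rfun \<delta> a b + e"] assms(2) unfolding Rfun_def by simp
  then show ?thesis using that by auto
qed

lemma Rfun_antimono:
  assumes "(a, b) \<in> Dadm \<delta>" "a \<le> a'" "b \<le> b'"
  shows "Rfun \<delta> a' b' \<le> Rfun \<delta> a b"
  unfolding Rfun_def[of \<delta> a b]
proof (rule cInf_greatest)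
  show "{MI \<delta> W | W. feasible \<delta> a b W} \<noteq> {}" using feasible_lossless_chan[OF assms(1)] by auto
  fix y assume "y \<in> {MI \<delta> W | W. feasible \<delta> a b W}"
  then obtain W where "feasible \<delta> a b W" "y = MI \<delta> W" by auto
  then show "Rfun \<delta> a' b' \<le> y" using assms Rfun_le_MI[of a' b' W] by (auto simp: feasible_def)
qed

lemma out_marg_mix_chan:
  "0 \<le> t \<Longrightarrow> t \<le> 1 \<Longrightarrow> out_marg \<delta> (mix_chan t V1 V2) r = t * out_marg \<delta> V1 r + (1 - t) * out_marg \<delta> V2 r"
  unfolding out_marg_def by (simp add: pmf_mix_chan sum.distrib sum_distrib_left distrib_left mult.left_commute)

lemma Eds_mix_chan:
  "0 \<le> t \<Longrightarrow> t \<le> 1 \<Longrightarrow> Eds \<delta> (mix_chan t V1 V2) = t * Eds \<delta> V1 + (1 - t) * Eds \<delta> V2"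
  unfolding Eds_def
  by (simp add: pmf_mix_chan sum.distrib sum_distrib_left distrib_left distrib_right mult.assoc mult.left_commute)

lemma Edx_mix_chan:
  "0 \<le> t \<Longrightarrow> t \<le> 1 \<Longrightarrow> Edx \<delta> (mix_chan t V1 V2) = t * Edx \<delta> V1 + (1 - t) * Edx \<delta> V2"
  unfolding Edx_def
  by (simp add: pmf_mix_chan sum.distrib sum_distrib_left distrib_left distrib_right mult.assoc mult.left_commute)

lemma MI_mix_chan_le:
  assumes t0: "0 \<le> t" and t1: "t \<le> 1"
  shows "MI \<delta> (mix_chan t V1 V2) \<le> t * MI \<delta> V1 + (1 - t) * MI \<delta> V2"
proof -
  let ?V = "mix_chan t V1 V2"
  let ?i = "\<lambda>V x r. pmf (V x) r * ln (pmf (V x) r / out_marg \<delta> V r)"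
  have termwise: "PX x * ?i ?V x r \<le> t * (PX x * ?i V1 x r) + (1 - t) * (PX x * ?i V2 x r)" for x r
  proof (cases "PX x = 0")
    case False
    then have px: "0 < PX x" using pmf_nonneg[of "efcfX \<delta>" x] by linarith
    define u where "u = (\<lambda>b. if b then t * pmf (V1 x) r else (1 - t) * pmf (V2 x) r)"
    define w where "w = (\<lambda>b. if b then t * out_marg \<delta> V1 r else (1 - t) * out_marg \<delta> V2 r)"
    have log_sum: "(\<Sum>b\<in>UNIV. u b) * ln ((\<Sum>b\<in>UNIV. u b) / (\<Sum>b\<in>UNIV. w b))
        \<le> (\<Sum>b\<in>UNIV. u b * ln (u b / w b))"
      by (rule log_sum_inequality)
         (use t0 t1 px out_marg_nonneg out_marg_pos[of x V1 r] out_marg_pos[of x V2 r]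
          in \<open>auto simp: u_def w_def zero_less_mult_iff\<close>)
    have "(\<Sum>b\<in>UNIV. u b) = pmf (?V x) r" by (simp add: u_def pmf_mix_chan[OF t0 t1] UNIV_bool)
    moreover have "(\<Sum>b\<in>UNIV. w b) = out_marg \<delta> ?V r"
      by (simp add: w_def out_marg_mix_chan[OF t0 t1] UNIV_bool)
    moreover have "u True * ln (u True / w True) = t * ?i V1 x r"
      by (cases "t = 0") (auto simp: u_def w_def)
    moreover have "u False * ln (u False / w False) = (1 - t) * ?i V2 x r"
      by (cases "t = 1") (auto simp: u_def w_def)
    ultimately have "?i ?V x r \<le> t * ?i V1 x r + (1 - t) * ?i V2 x r"
      using log_sum by (simp add: UNIV_bool add.commute)
    then have "PX x * ?i ?V x r \<le> PX x * (t * ?i V1 x r + (1 - t) * ?i V2 x r)"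
      using px by (intro mult_left_mono) auto
    then show ?thesis by (simp add: algebra_simps)
  qed simp
  have "MI \<delta> ?V \<le> (\<Sum>x\<in>UNIV. \<Sum>r\<in>UNIV. t * (PX x * ?i V1 x r) + (1 - t) * (PX x * ?i V2 x r))"
    unfolding MI_def by (intro sum_mono) (simp add: termwise mult.assoc)
  also have "\<dots> = t * MI \<delta> V1 + (1 - t) * MI \<delta> V2"
    unfolding MI_def by (simp add: sum.distrib sum_distrib_left mult.assoc)
  finally show ?thesis .
qed

lemma convex_on_Rfun: "convex_on (Dadm \<delta>) (case_prod (Rfun \<delta>))"
proof (rule convex_onI)
  fix t :: real and q1 q2 assume t: "0 < t" "t < 1" and q1: "q1 \<in> Dadm \<delta>" and q2: "q2 \<in> Dadm \<delta>"
  obtain a1 b1 a2 b2 where q: "q1 = (a1, b1)" "q2 = (a2, b2)" by fastforce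
  let ?a = "(1 - t) * a1 + t * a2" and ?b = "(1 - t) * b1 + t * b2"
  have "Rfun \<delta> ?a ?b \<le> (1 - t) * Rfun \<delta> a1 b1 + t * Rfun \<delta> a2 b2 + e" if e: "0 < e" for e
  proof -
    obtain V1 where V1: "feasible \<delta> a1 b1 V1" "MI \<delta> V1 < Rfun \<delta> a1 b1 + e"
      using Rfun_approx q1 q e by metis
    obtain V2 where V2: "feasible \<delta> a2 b2 V2" "MI \<delta> V2 < Rfun \<delta> a2 b2 + e"
      using Rfun_approx q2 q e by metis
    let ?V = "mix_chan (1 - t) V1 V2"
    have "feasible \<delta> ?a ?b ?V"
      using V1(1) V2(1) t unfolding feasible_def
      by (simp add: Eds_mix_chan Edx_mix_chan add_mono mult_left_mono)
    then have "Rfun \<delta> ?a ?b \<le> MI \<delta> ?V" by (rule Rfun_le_MI)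
    also have "\<dots> \<le> (1 - t) * MI \<delta> V1 + t * MI \<delta> V2" using MI_mix_chan_le[of "1 - t" V1 V2] t by simp
    also have "\<dots> \<le> (1 - t) * (Rfun \<delta> a1 b1 + e) + t * (Rfun \<delta> a2 b2 + e)"
      using V1(2) V2(2) t by (intro add_mono mult_left_mono) auto
    finally show ?thesis by (simp add: algebra_simps)
  qed
  then have "Rfun \<delta> ?a ?b \<le> (1 - t) * Rfun \<delta> a1 b1 + t * Rfun \<delta> a2 b2"
    by (meson field_le_epsilon)
  then show "case_prod (Rfun \<delta>) ((1 - t) *\<^sub>R q1 + t *\<^sub>R q2)
      \<le> (1 - t) * case_prod (Rfun \<delta>) q1 + t * case_prod (Rfun \<delta>) q2"
    by (simp add: q)
qed (rule convex_Dadm)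

end

section \<open>Lagrangian duality and tilted channels\<close>

definition is_prob_fun :: "('a::finite \<Rightarrow> real) \<Rightarrow> bool" where
  "is_prob_fun Q \<longleftrightarrow> (\<forall>r. 0 \<le> Q r) \<and> (\<Sum>r\<in>UNIV. Q r) = 1"

definition tilt_cost :: "real \<Rightarrow> real \<Rightarrow> sym \<Rightarrow> bool \<times> sym \<Rightarrow> real" where
  "tilt_cost ls lx x r = ls * dbar_s x (fst r) + lx * d_x x (snd r)"

definition partition_fn :: "real \<Rightarrow> real \<Rightarrow> (bool \<times> sym \<Rightarrow> real) \<Rightarrow> sym \<Rightarrow> real" where
  "partition_fn ls lx Q x = (\<Sum>r\<in>UNIV. Q r * exp (- tilt_cost ls lx x r))"

definition tilted_chan :: "real \<Rightarrow> real \<Rightarrow> (bool \<times> sym \<Rightarrow> real) \<Rightarrow> chan" where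
  "tilted_chan ls lx Q x = embed_pmf (\<lambda>r. Q r * exp (- tilt_cost ls lx x r) / partition_fn ls lx Q x)"

lemma partition_fn_pos: "is_prob_fun Q \<Longrightarrow> 0 < partition_fn ls lx Q x"
proof -
  assume Q: "is_prob_fun Q"
  then obtain r where "0 < Q r"
    unfolding is_prob_fun_def by (metis less_eq_real_def sum.neutral zero_neq_one)
  then have "0 < Q r * exp (- tilt_cost ls lx x r)" by simp
  also have "\<dots> \<le> partition_fn ls lx Q x" unfolding partition_fn_def
    by (rule member_le_sum) (use Q in \<open>auto simp: is_prob_fun_def\<close>)
  finally show ?thesis .
qed

lemma pmf_tilted_chan:
  assumes "is_prob_fun Q"
  shows "pmf (tilted_chan ls lx Q x) r = Q r * exp (- tilt_cost ls lx x r) / partition_fn ls lx Q x"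
  unfolding tilted_chan_def
proof (rule pmf_embed_pmf_finite)
  show "0 \<le> Q r * exp (- tilt_cost ls lx x r) / partition_fn ls lx Q x" for r
  proof -
    have "0 \<le> Q r" using assms unfolding is_prob_fun_def by blast
    then show ?thesis using partition_fn_pos[OF assms, of ls lx x] by simp
  qed
  show "(\<Sum>r\<in>UNIV. Q r * exp (- tilt_cost ls lx x r) / partition_fn ls lx Q x) = 1"
    using partition_fn_pos[OF assms, of ls lx x]
    by (simp add: sum_divide_distrib[symmetric] partition_fn_def[symmetric])
qed

lemma pmf_tilted_chan_pos_iff:
  "is_prob_fun Q \<Longrightarrow> 0 < pmf (tilted_chan ls lx Q x) r \<longleftrightarrow> 0 < Q r"
  using partition_fn_pos[of Q ls lx x] by (auto simp: pmf_tilted_chan is_prob_fun_def zero_less_mult_iff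
      zero_less_divide_iff)

lemma partition_fn_mix_point:
  "partition_fn ls lx (\<lambda>r. (1 - t) * Q r + t * of_bool (r = r0)) x
     = (1 - t) * partition_fn ls lx Q x + t * exp (- tilt_cost ls lx x r0)"
proof -
  have "(\<Sum>r\<in>UNIV. ((1 - t) * Q r + t * of_bool (r = r0)) * exp (- tilt_cost ls lx x r))
      = (1 - t) * (\<Sum>r\<in>UNIV. Q r * exp (- tilt_cost ls lx x r))
        + t * (\<Sum>r\<in>UNIV. of_bool (r = r0) * exp (- tilt_cost ls lx x r))"
    by (simp only: distrib_right sum.distrib sum_distrib_left mult.assoc)
  moreover have "(\<Sum>r\<in>UNIV. of_bool (r = r0) * exp (- tilt_cost ls lx x r)) = exp (- tilt_cost ls lx x r0)"
  proof -
    have "of_bool (r = r0) * exp (- tilt_cost ls lx x r) = (if r0 = r then exp (- tilt_cost ls lx x r) else 0)"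
      for r by simp
    then show ?thesis by simp
  qed
  ultimately show ?thesis unfolding partition_fn_def by simp
qed

context efcf_source
begin

definition lagrangian :: "real \<Rightarrow> real \<Rightarrow> chan \<Rightarrow> real" where
  "lagrangian ls lx V = MI \<delta> V + ls * Eds \<delta> V + lx * Edx \<delta> V"

definition dual_fn :: "real \<Rightarrow> real \<Rightarrow> (bool \<times> sym \<Rightarrow> real) \<Rightarrow> real" where
  "dual_fn ls lx Q = (\<Sum>x\<in>UNIV. PX x * - ln (partition_fn ls lx Q x))"

lemma is_prob_fun_out_marg: "is_prob_fun (out_marg \<delta> V)"
  unfolding is_prob_fun_def using out_marg_nonneg sum_out_marg by blast

lemma expected_tilt_cost:
  "ls * Eds \<delta> V + lx * Edx \<delta> V = (\<Sum>x\<in>UNIV. PX x * (\<Sum>r\<in>UNIV. pmf (V x) r * tilt_cost ls lx x r))"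
  unfolding Eds_def Edx_def tilt_cost_def
  by (simp add: sum_distrib_left sum.distrib[symmetric] distrib_left mult.left_commute)

lemma MI_le_cond_kl_divergence:
  assumes Q: "is_prob_fun Q" and supp: "\<And>x r. 0 < PX x \<Longrightarrow> 0 < pmf (V x) r \<Longrightarrow> 0 < Q r"
  shows "MI \<delta> V \<le> (\<Sum>x\<in>UNIV. \<Sum>r\<in>UNIV. PX x * pmf (V x) r * ln (pmf (V x) r / Q r))"
proof -
  let ?out = "out_marg \<delta> V"
  have termwise: "PX x * pmf (V x) r * ln (pmf (V x) r / Q r) - PX x * pmf (V x) r * ln (pmf (V x) r / ?out r)
      = PX x * pmf (V x) r * ln (?out r / Q r)" for x r
  proof (cases "PX x * pmf (V x) r = 0")
    case False
    then have "0 < PX x" "0 < pmf (V x) r"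
      using pmf_nonneg[of "efcfX \<delta>" x] pmf_nonneg[of "V x" r] by (auto simp: less_le)
    moreover from this have "0 < Q r" "0 < ?out r" using supp out_marg_pos by blast+
    ultimately show ?thesis by (simp add: ln_div algebra_simps)
  qed auto
  have supp_out: "0 < Q r" if pos: "0 < ?out r" for r
  proof -
    obtain x where "PX x * pmf (V x) r \<noteq> 0"
      using pos unfolding out_marg_def by (metis (no_types, lifting) less_irrefl sum.neutral)
    then have "0 < PX x" "0 < pmf (V x) r"
      using pmf_nonneg[of "efcfX \<delta>" x] pmf_nonneg[of "V x" r] by (auto simp: less_le)
    then show "0 < Q r" by (rule supp)
  qed
  have "(\<Sum>x\<in>UNIV. \<Sum>r\<in>UNIV. PX x * pmf (V x) r * ln (pmf (V x) r / Q r)) - MI \<delta> V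
      = (\<Sum>x\<in>UNIV. \<Sum>r\<in>UNIV. PX x * pmf (V x) r * ln (?out r / Q r))"
    unfolding MI_def by (simp add: sum_subtractf[symmetric] termwise)
  also have "\<dots> = (\<Sum>r\<in>UNIV. ?out r * ln (?out r / Q r))"
    by (subst sum.swap) (simp add: out_marg_def sum_distrib_right)
  also have "0 \<le> \<dots>"
    using kl_divergence_nonneg[of ?out Q] out_marg_nonneg sum_out_marg Q supp_out
    unfolding is_prob_fun_def by blast
  finally show ?thesis by simp
qed

lemma lagrangian_tilted_chan_le: "is_prob_fun Q \<Longrightarrow> lagrangian ls lx (tilted_chan ls lx Q) \<le> dual_fn ls lx Q"
proof -
  assume Q: "is_prob_fun Q"
  let ?V = "tilted_chan ls lx Q" and ?Z = "partition_fn ls lx Q"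
  have "pmf (?V x) r * (ln (pmf (?V x) r / Q r) + tilt_cost ls lx x r) = pmf (?V x) r * - ln (?Z x)" for x r
  proof (cases "Q r = 0")
    case False
    then have "0 < Q r" using Q unfolding is_prob_fun_def by (metis less_eq_real_def)
    then show ?thesis using partition_fn_pos[OF Q] by (simp add: pmf_tilted_chan[OF Q] ln_div ln_mult)
  qed (simp add: pmf_tilted_chan[OF Q])
  then have "(\<Sum>x\<in>UNIV. PX x * (\<Sum>r\<in>UNIV. pmf (?V x) r * (ln (pmf (?V x) r / Q r) + tilt_cost ls lx x r)))
      = dual_fn ls lx Q"
    unfolding dual_fn_def by (simp add: sum_negf sum_distrib_right[symmetric])
  moreover have "lagrangian ls lx ?V
      \<le> (\<Sum>x\<in>UNIV. PX x * (\<Sum>r\<in>UNIV. pmf (?V x) r * (ln (pmf (?V x) r / Q r) + tilt_cost ls lx x r)))"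
    unfolding lagrangian_def add.assoc expected_tilt_cost
    using MI_le_cond_kl_divergence[OF Q, of ?V] pmf_tilted_chan_pos_iff[OF Q]
    by (simp add: distrib_left sum.distrib sum_distrib_left mult.assoc)
  ultimately show ?thesis by simp
qed

lemma lagrangian_decomposition:
  fixes V :: chan
  defines "Q \<equiv> out_marg \<delta> V"
  shows "lagrangian ls lx V = (\<Sum>x\<in>UNIV. PX x * (\<Sum>r\<in>UNIV.
      pmf (V x) r * ln (pmf (V x) r / pmf (tilted_chan ls lx Q x) r))) + dual_fn ls lx Q"
proof -
  have Q: "is_prob_fun Q" unfolding Q_def by (rule is_prob_fun_out_marg)
  have termwise: "PX x * (pmf (V x) r * ln (pmf (V x) r / Q r) + pmf (V x) r * tilt_cost ls lx x r)
      = PX x * (pmf (V x) r * ln (pmf (V x) r / pmf (tilted_chan ls lx Q x) r)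
          - pmf (V x) r * ln (partition_fn ls lx Q x))" for x r
  proof (cases "PX x * pmf (V x) r = 0")
    case True
    then show ?thesis by (auto simp: algebra_simps)
  next
    case False
    then have "0 < PX x" "0 < pmf (V x) r"
      using pmf_nonneg[of "efcfX \<delta>" x] pmf_nonneg[of "V x" r] by (auto simp: less_le)
    moreover from this have "0 < Q r" unfolding Q_def by (rule out_marg_pos)
    ultimately show ?thesis
      using partition_fn_pos[OF Q, of ls lx x]
      by (simp add: pmf_tilted_chan[OF Q] ln_div ln_mult algebra_simps)
  qed
  have "lagrangian ls lx V = (\<Sum>x\<in>UNIV. \<Sum>r\<in>UNIV.
      PX x * (pmf (V x) r * ln (pmf (V x) r / Q r) + pmf (V x) r * tilt_cost ls lx x r))"
    unfolding lagrangian_def add.assoc expected_tilt_cost MI_def Q_def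
    by (simp add: sum.distrib[symmetric] sum_distrib_left distrib_left mult.assoc)
  also have "\<dots> = (\<Sum>x\<in>UNIV. PX x * (\<Sum>r\<in>UNIV.
      pmf (V x) r * ln (pmf (V x) r / pmf (tilted_chan ls lx Q x) r))) + dual_fn ls lx Q"
    unfolding termwise dual_fn_def
    by (simp add: sum_distrib_left[symmetric] sum_subtractf sum.distrib[symmetric]
        sum_distrib_right[symmetric] algebra_simps)
  finally show ?thesis .
qed

lemma lagrangian_minimizer:
  assumes min: "\<And>V. lagrangian ls lx W \<le> lagrangian ls lx V"
  defines "Q \<equiv> out_marg \<delta> W"
  shows lagrangian_minimizer_value: "lagrangian ls lx W = dual_fn ls lx Q"
    and lagrangian_minimizer_tilted: "0 < PX x \<Longrightarrow> W x = tilted_chan ls lx Q x"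
proof -
  have Q: "is_prob_fun Q" unfolding Q_def by (rule is_prob_fun_out_marg)
  define D where "D = (\<lambda>x. \<Sum>r\<in>UNIV. pmf (W x) r * ln (pmf (W x) r / pmf (tilted_chan ls lx Q x) r))"
  have supp: "0 < pmf (tilted_chan ls lx Q x) r" if "0 < PX x" "0 < pmf (W x) r" for x r
    using out_marg_pos[where V = W, OF that] pmf_tilted_chan_pos_iff[OF Q] unfolding Q_def by blast
  have D: "0 \<le> D x" if "0 < PX x" for x
    unfolding D_def by (rule kl_divergence_nonneg) (auto intro: supp[OF that])
  have PD: "0 \<le> PX x * D x" for x
    using D[of x] pmf_nonneg[of "efcfX \<delta>" x] by (cases "0 < PX x") (auto simp: less_le)
  have decomp: "lagrangian ls lx W = (\<Sum>x\<in>UNIV. PX x * D x) + dual_fn ls lx Q"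
    unfolding D_def Q_def by (rule lagrangian_decomposition)
  moreover have "lagrangian ls lx W \<le> dual_fn ls lx Q"
    using order_trans[OF min lagrangian_tilted_chan_le[OF Q]] .
  moreover have "0 \<le> (\<Sum>x\<in>UNIV. PX x * D x)" by (rule sum_nonneg) (rule PD)
  ultimately have sum_0: "(\<Sum>x\<in>UNIV. PX x * D x) = 0" by linarith
  then show "lagrangian ls lx W = dual_fn ls lx Q" using decomp by simp
  have PD0: "PX x * D x = 0" for x
    using sum_nonneg_eq_0_iff[of UNIV "\<lambda>x. PX x * D x"] sum_0 PD by simp
  assume x: "0 < PX x"
  have "pmf (W x) = pmf (tilted_chan ls lx Q x)"
    by (rule kl_divergence_le_0_imp_eq) (use x PD0[of x] supp[OF x] in \<open>auto simp: D_def\<close>)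
  then show "W x = tilted_chan ls lx Q x" by (intro pmf_eqI) simp
qed

lemma dual_fn_mix_point:
  fixes ls lx :: real and r0 :: "bool \<times> sym"
  assumes Q: "is_prob_fun Q" and t: "0 \<le> t" "t \<le> 1"
  defines "b \<equiv> \<lambda>x. exp (- tilt_cost ls lx x r0) / partition_fn ls lx Q x - 1"
  shows dual_fn_mix_point_pos: "0 < 1 + t * b x"
    and "dual_fn ls lx (\<lambda>r. (1 - t) * Q r + t * of_bool (r = r0))
      = dual_fn ls lx Q - (\<Sum>x\<in>UNIV. PX x * ln (1 + t * b x))"
proof -
  have Z: "0 < partition_fn ls lx Q x" for x by (rule partition_fn_pos[OF Q])
  have pos: "0 < 1 + t * b x" for x
  proof -
    have "1 + t * b x = (1 - t) + t * (exp (- tilt_cost ls lx x r0) / partition_fn ls lx Q x)"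
      by (simp add: b_def algebra_simps)
    moreover have A: "0 < exp (- tilt_cost ls lx x r0) / partition_fn ls lx Q x" using Z[of x] by simp
    moreover have "0 < (1 - t) + t * (exp (- tilt_cost ls lx x r0) / partition_fn ls lx Q x)"
    proof (cases "t = 1")
      case False
      then show ?thesis using t by (intro add_pos_nonneg mult_nonneg_nonneg less_imp_le[OF A]) auto
    qed (use A in simp)
    ultimately show ?thesis by simp
  qed
  then show "0 < 1 + t * b x" .
  have "partition_fn ls lx (\<lambda>r. (1 - t) * Q r + t * of_bool (r = r0)) x = partition_fn ls lx Q x * (1 + t * b x)" for x
    using Z[of x] unfolding partition_fn_mix_point by (simp add: b_def field_simps)
  then have "ln (partition_fn ls lx (\<lambda>r. (1 - t) * Q r + t * of_bool (r = r0)) x)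
      = ln (partition_fn ls lx Q x) + ln (1 + t * b x)" for x
    by (simp only: ln_mult_pos[OF Z pos])
  then show "dual_fn ls lx (\<lambda>r. (1 - t) * Q r + t * of_bool (r = r0))
      = dual_fn ls lx Q - (\<Sum>x\<in>UNIV. PX x * ln (1 + t * b x))"
    unfolding dual_fn_def by (simp add: algebra_simps sum_subtractf)
qed

text \<open>First-order optimality of the output distribution Q: moving Q towards the point mass at r0
  cannot increase the dual function.\<close>
lemma lagrangian_minimizer_kkt:
  assumes min: "\<And>V. lagrangian ls lx W \<le> lagrangian ls lx V"
  shows "(\<Sum>x\<in>UNIV. PX x * (exp (- tilt_cost ls lx x r0) / partition_fn ls lx (out_marg \<delta> W) x)) \<le> 1"
proof -
  let ?Q = "out_marg \<delta> W"
  have Q: "is_prob_fun ?Q" by (rule is_prob_fun_out_marg)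
  define b where "b = (\<lambda>x. exp (- tilt_cost ls lx x r0) / partition_fn ls lx ?Q x - 1)"
  have slope_le: "(\<Sum>x\<in>UNIV. PX x * (b x / (1 + t * b x))) \<le> 0" if t: "0 < t" "t < 1" for t
  proof -
    define Qt where "Qt = (\<lambda>r. (1 - t) * ?Q r + t * of_bool (r = r0))"
    have Qt: "is_prob_fun Qt"
      using Q t unfolding is_prob_fun_def Qt_def
      by (auto simp: sum.distrib sum_distrib_left[symmetric] intro!: add_nonneg_nonneg mult_nonneg_nonneg)
    have pos: "0 < 1 + t * b x" for x using dual_fn_mix_point_pos[OF Q] t by (simp add: b_def)
    have "dual_fn ls lx ?Q \<le> dual_fn ls lx Qt"
      using lagrangian_minimizer_value[OF min] min[of "tilted_chan ls lx Qt"]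
        lagrangian_tilted_chan_le[OF Qt, of ls lx]
      by linarith
    then have "(\<Sum>x\<in>UNIV. PX x * ln (1 + t * b x)) \<le> 0"
      using dual_fn_mix_point(2)[OF Q, of t ls lx r0] t unfolding Qt_def b_def by simp
    moreover have "(\<Sum>x\<in>UNIV. PX x * (t * b x / (1 + t * b x))) \<le> (\<Sum>x\<in>UNIV. PX x * ln (1 + t * b x))"
      using pos div_one_plus_le_ln by (intro sum_mono mult_left_mono) auto
    ultimately have "t * (\<Sum>x\<in>UNIV. PX x * (b x / (1 + t * b x))) \<le> 0"
      by (simp add: sum_distrib_left mult.left_commute)
    then show ?thesis using t by (simp add: mult_le_0_iff)
  qed
  have "((\<lambda>t. \<Sum>x\<in>UNIV. PX x * (b x / (1 + t * b x))) \<longlongrightarrow> (\<Sum>x\<in>UNIV. PX x * (b x / (1 + 0 * b x))))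
      (at_right 0)"
    by (intro tendsto_intros) auto
  moreover have "\<forall>\<^sub>F t in at_right (0::real). (\<Sum>x\<in>UNIV. PX x * (b x / (1 + t * b x))) \<le> 0"
    using eventually_at_right_real[of 0 1] by (rule eventually_mono) (use slope_le in auto)
  ultimately have "(\<Sum>x\<in>UNIV. PX x * b x) \<le> 0"
    using tendsto_upperbound by fastforce
  then show ?thesis by (simp add: b_def algebra_simps sum_subtractf)
qed

end

section \<open>Uniqueness of the subgradient of R on D_in\<close>

lemma dbar_s_Not: "dbar_s x (\<not> z) = 1 - dbar_s x z"
  by (cases x) (auto simp: dbar_s_def)

lemma d_x_Some: "d_x x (Some z) = dbar_s x z + (if x = None then 1/2 else 0)"
  by (cases x) (auto simp: dbar_s_def d_x_def)

lemma d_x_Some_Not: "d_x x (Some (\<not> z)) = 1 - dbar_s x z + (if x = None then 1/2 else 0)"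
  by (cases x) (auto simp: dbar_s_def d_x_def)

lemma distortion_eq_cases:
  fixes Ds Dx :: real and r r' :: "bool \<times> sym"
  assumes "\<And>bb. Ds * dbar_s (Some bb) (fst r) + Dx * d_x (Some bb) (snd r)
      = Ds * dbar_s (Some bb) (fst r') + Dx * d_x (Some bb) (snd r')"
  shows "(Dx = 0 \<longrightarrow> Ds \<noteq> 0 \<longrightarrow> fst r = fst r') \<and> (Ds = 0 \<longrightarrow> Dx \<noteq> 0 \<longrightarrow> snd r = snd r') \<and>
    (Ds \<noteq> 0 \<longrightarrow> Dx \<noteq> 0 \<longrightarrow> r = r' \<or> (snd r = Some (fst r) \<and> snd r' = Some (fst r'))
       \<or> (snd r = Some (\<not> fst r) \<and> snd r' = Some (\<not> fst r')))"
proof -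
  obtain z y z' y' where rr: "r = (z, y)" "r' = (z', y')" by fastforce
  show ?thesis using assms[of False] assms[of True] unfolding rr
    by (cases z; cases z'; cases y; cases y'; auto simp: dbar_s_def d_x_def split: if_splits)
qed

lemma support_shapes:
  fixes S :: "(bool \<times> sym) set"
  assumes r1: "r1 \<in> S" and D: "Ds \<noteq> 0 \<or> Dx \<noteq> 0"
    and eq: "\<And>bb r r'. r \<in> S \<Longrightarrow> r' \<in> S \<Longrightarrow> Ds * dbar_s (Some bb) (fst r) + Dx * d_x (Some bb) (snd r)
      = Ds * dbar_s (Some bb) (fst r') + Dx * d_x (Some bb) (snd r')"
  shows "(Ds \<noteq> 0 \<and> (\<forall>r\<in>S. fst r = fst r1)) \<or> (Dx \<noteq> 0 \<and> (\<forall>r\<in>S. snd r = snd r1))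
    \<or> (Ds \<noteq> 0 \<and> Dx \<noteq> 0 \<and> (\<forall>r\<in>S. snd r = Some (fst r)))
    \<or> (Ds \<noteq> 0 \<and> Dx \<noteq> 0 \<and> (\<forall>r\<in>S. snd r = Some (\<not> fst r)))"
proof -
  have pair: "(Dx = 0 \<longrightarrow> Ds \<noteq> 0 \<longrightarrow> fst r = fst r') \<and> (Ds = 0 \<longrightarrow> Dx \<noteq> 0 \<longrightarrow> snd r = snd r') \<and>
      (Ds \<noteq> 0 \<longrightarrow> Dx \<noteq> 0 \<longrightarrow> r = r' \<or> (snd r = Some (fst r) \<and> snd r' = Some (fst r'))
        \<or> (snd r = Some (\<not> fst r) \<and> snd r' = Some (\<not> fst r')))" if "r \<in> S" "r' \<in> S" for r r'
    by (rule distortion_eq_cases) (rule eq[OF that])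
  consider "Dx = 0" | "Ds = 0" | "Ds \<noteq> 0" "Dx \<noteq> 0" "\<forall>r\<in>S. r = r1"
    | r2 where "Ds \<noteq> 0" "Dx \<noteq> 0" "r2 \<in> S" "r2 \<noteq> r1"
    by blast
  then show ?thesis
  proof cases
    case 1
    then have "fst r = fst r1" if "r \<in> S" for r using D pair[OF that r1] by simp
    then show ?thesis using 1 D by simp
  next
    case 2
    then have "snd r = snd r1" if "r \<in> S" for r using D pair[OF that r1] by simp
    then show ?thesis using 2 D by simp
  next
    case 3
    then show ?thesis by simp
  next
    case 4
    have shape: "r = r1 \<or> (snd r = Some (fst r) \<and> snd r1 = Some (fst r1))
        \<or> (snd r = Some (\<not> fst r) \<and> snd r1 = Some (\<not> fst r1))" if "r \<in> S" for r
      using pair[OF that r1] 4 by blast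
    have "snd r1 = Some (fst r1) \<or> snd r1 = Some (\<not> fst r1)"
      using shape[OF 4(3)] 4(4) by blast
    then show ?thesis
    proof
      assume "snd r1 = Some (fst r1)"
      then have "snd r = Some (fst r)" if "r \<in> S" for r using shape[OF that] by auto
      then show ?thesis using 4 by simp
    next
      assume "snd r1 = Some (\<not> fst r1)"
      then have "snd r = Some (\<not> fst r)" if "r \<in> S" for r using shape[OF that] by auto
      then show ?thesis using 4 by simp
    qed
  qed
qed

definition flip_z_chan :: "chan \<Rightarrow> chan" where
  "flip_z_chan V = (\<lambda>x. map_pmf (\<lambda>r. (\<not> fst r, snd r)) (V x))"

definition const_y_chan :: "sym \<Rightarrow> chan \<Rightarrow> chan" where
  "const_y_chan y0 V = (\<lambda>x. map_pmf (\<lambda>r. (fst r, y0)) (V x))"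

definition copy_z_chan :: "chan \<Rightarrow> chan" where
  "copy_z_chan V = (\<lambda>x. map_pmf (\<lambda>r. (fst r, Some (fst r))) (V x))"

lemma pmf_map_pmf_pos_imp_image: "0 < pmf (map_pmf f p) r \<Longrightarrow> r \<in> f ` set_pmf p"
  by (metis less_irrefl set_map_pmf set_pmf_iff)

context efcf_source
begin

lemma sum_PX_chan_affine:
  "(\<Sum>x\<in>UNIV. PX x * (\<Sum>r\<in>UNIV. pmf (V x) r * (s * g x r + c x)))
     = s * (\<Sum>x\<in>UNIV. PX x * (\<Sum>r\<in>UNIV. pmf (V x) r * g x r)) + (\<Sum>x\<in>UNIV. PX x * c x)"
  for V :: chan
  by (simp add: distrib_left sum.distrib sum_distrib_left[symmetric] sum_distrib_right[symmetric]
      mult.assoc mult.left_commute)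

lemma sum_PX_chan_const: "(\<Sum>x\<in>UNIV. PX x * (\<Sum>r\<in>UNIV. pmf (V x) r * c x)) = (\<Sum>x\<in>UNIV. PX x * c x)"
  for V :: chan
  using sum_PX_chan_affine[of V 0 "\<lambda>_ _. 0" c] by simp

lemma sum_PX_chan_cong_support:
  fixes V :: chan
  assumes "\<And>x r. 0 < PX x \<Longrightarrow> 0 < pmf (V x) r \<Longrightarrow> g x r = h x r"
  shows "(\<Sum>x\<in>UNIV. PX x * (\<Sum>r\<in>UNIV. pmf (V x) r * g x r)) = (\<Sum>x\<in>UNIV. PX x * (\<Sum>r\<in>UNIV. pmf (V x) r * h x r))"
proof (intro sum.cong refl)
  fix x
  show "PX x * (\<Sum>r\<in>UNIV. pmf (V x) r * g x r) = PX x * (\<Sum>r\<in>UNIV. pmf (V x) r * h x r)"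
  proof (cases "0 < PX x")
    case True
    have "(\<Sum>r\<in>UNIV. pmf (V x) r * g x r) = (\<Sum>r\<in>UNIV. pmf (V x) r * h x r)"
    proof (rule sum.cong[OF refl])
      fix r
      show "pmf (V x) r * g x r = pmf (V x) r * h x r"
        using assms[OF True, of r] pmf_nonneg[of "V x" r] by (cases "pmf (V x) r = 0") auto
    qed
    then show ?thesis by simp
  next
    case False
    then show ?thesis using pmf_nonneg[of "efcfX \<delta>" x] by simp
  qed
qed

lemma Eds_eq_half_if_const_z:
  assumes "\<And>x r. 0 < PX x \<Longrightarrow> 0 < pmf (V x) r \<Longrightarrow> fst r = z0"
  shows "Eds \<delta> V = 1/2"
proof -
  have "Eds \<delta> V = (\<Sum>x\<in>UNIV. PX x * (\<Sum>r\<in>UNIV. pmf (V x) r * dbar_s x z0))"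
    unfolding Eds_def by (rule sum_PX_chan_cong_support) (use assms in simp)
  also have "\<dots> = 1/2"
    unfolding sum_PX_chan_const by (cases z0) (simp_all add: sum_sym dbar_s_def field_simps)
  finally show ?thesis .
qed

lemma Edx_eq_if_const_y:
  assumes "\<And>x r. 0 < PX x \<Longrightarrow> 0 < pmf (V x) r \<Longrightarrow> snd r = y0"
  shows "Edx \<delta> V = (\<Sum>x\<in>UNIV. PX x * d_x x y0)"
proof -
  have "Edx \<delta> V = (\<Sum>x\<in>UNIV. PX x * (\<Sum>r\<in>UNIV. pmf (V x) r * d_x x y0))"
    unfolding Edx_def by (rule sum_PX_chan_cong_support) (use assms in simp)
  then show ?thesis unfolding sum_PX_chan_const .
qed

lemma Edx_eq_if_copy_z:
  assumes "\<And>x r. 0 < PX x \<Longrightarrow> 0 < pmf (V x) r \<Longrightarrow> snd r = Some (fst r)"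
  shows "Edx \<delta> V = Eds \<delta> V + \<delta> / 2"
proof -
  have "Edx \<delta> V = (\<Sum>x\<in>UNIV. PX x * (\<Sum>r\<in>UNIV. pmf (V x) r *
      (1 * dbar_s x (fst r) + (if x = None then 1/2 else 0))))"
    unfolding Edx_def by (rule sum_PX_chan_cong_support) (use assms in \<open>simp add: d_x_Some\<close>)
  then show ?thesis unfolding sum_PX_chan_affine Eds_def by (simp add: sum_sym)
qed

lemma Edx_eq_if_anticopy_z:
  assumes "\<And>x r. 0 < PX x \<Longrightarrow> 0 < pmf (V x) r \<Longrightarrow> snd r = Some (\<not> fst r)"
  shows "Edx \<delta> V = 1 - Eds \<delta> V + \<delta> / 2"
proof -
  have "Edx \<delta> V = (\<Sum>x\<in>UNIV. PX x * (\<Sum>r\<in>UNIV. pmf (V x) r *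
      (- 1 * dbar_s x (fst r) + (1 + (if x = None then 1/2 else 0)))))"
    unfolding Edx_def by (rule sum_PX_chan_cong_support) (use assms in \<open>simp add: d_x_Some_Not\<close>)
  then show ?thesis unfolding sum_PX_chan_affine Eds_def by (simp add: sum_sym)
qed

lemma Eds_flip_z_chan: "Eds \<delta> (flip_z_chan V) = 1 - Eds \<delta> V"
proof -
  have "Eds \<delta> (flip_z_chan V)
      = (\<Sum>x\<in>UNIV. PX x * (\<Sum>r\<in>UNIV. pmf (V x) r * (- 1 * dbar_s x (fst r) + 1)))"
    unfolding flip_z_chan_def Eds_map_pmf by (simp add: dbar_s_Not)
  then show ?thesis unfolding sum_PX_chan_affine Eds_def by simp
qed

lemma Edx_flip_z_chan: "Edx \<delta> (flip_z_chan V) = Edx \<delta> V"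
  unfolding flip_z_chan_def Edx_map_pmf by (simp add: Edx_def)

lemma Eds_const_y_chan: "Eds \<delta> (const_y_chan y0 V) = Eds \<delta> V"
  unfolding const_y_chan_def Eds_map_pmf by (simp add: Eds_def)

lemma Edx_const_y_chan: "Edx \<delta> (const_y_chan y0 V) = (\<Sum>x\<in>UNIV. PX x * d_x x y0)"
  by (rule Edx_eq_if_const_y) (auto simp: const_y_chan_def dest: pmf_map_pmf_pos_imp_image)

lemma Eds_copy_z_chan: "Eds \<delta> (copy_z_chan V) = Eds \<delta> V"
  unfolding copy_z_chan_def Eds_map_pmf by (simp add: Eds_def)

lemma Edx_copy_z_chan: "Edx \<delta> (copy_z_chan V) = Eds \<delta> V + \<delta> / 2"
proof -
  have "Edx \<delta> (copy_z_chan V) = Eds \<delta> (copy_z_chan V) + \<delta> / 2"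
    by (rule Edx_eq_if_copy_z) (auto simp: copy_z_chan_def dest: pmf_map_pmf_pos_imp_image)
  then show ?thesis by (simp add: Eds_copy_z_chan)
qed

lemma MI_flip_z_chan_le: "MI \<delta> (flip_z_chan V) \<le> MI \<delta> V"
  unfolding flip_z_chan_def by (rule MI_map_pmf_le)

lemma MI_const_y_chan_le: "MI \<delta> (const_y_chan y0 V) \<le> MI \<delta> V"
  unfolding const_y_chan_def by (rule MI_map_pmf_le)

lemma MI_copy_z_chan_le: "MI \<delta> (copy_z_chan V) \<le> MI \<delta> V"
  unfolding copy_z_chan_def by (rule MI_map_pmf_le)

definition is_subgradient :: "real \<times> real \<Rightarrow> real \<times> real \<Rightarrow> bool" where
  "is_subgradient p v \<longleftrightarrow> (\<forall>q\<in>Dadm \<delta>. case_prod (Rfun \<delta>) p + inner v (q - p) \<le> case_prod (Rfun \<delta>) q)"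

lemma subgradient_nonpos:
  assumes p: "(a, b) \<in> Dadm \<delta>" and v: "is_subgradient (a, b) v"
  shows "fst v \<le> 0" "snd v \<le> 0"
proof -
  have "(a + 1, b) \<in> Dadm \<delta>" "(a, b + 1) \<in> Dadm \<delta>" using p by (simp_all add: Dadm_iff)
  then have "Rfun \<delta> a b + fst v \<le> Rfun \<delta> (a + 1) b" "Rfun \<delta> a b + snd v \<le> Rfun \<delta> a (b + 1)"
    using v unfolding is_subgradient_def by (cases v, fastforce)+
  moreover have "Rfun \<delta> (a + 1) b \<le> Rfun \<delta> a b" "Rfun \<delta> a (b + 1) \<le> Rfun \<delta> a b"
    using Rfun_antimono[OF p] by simp_all
  ultimately show "fst v \<le> 0" "snd v \<le> 0" by simp_all
qed

lemma subgradient_lagrangian_lower_bound: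
  assumes v: "is_subgradient (a, b) v"
  shows "Rfun \<delta> a b - fst v * a - snd v * b \<le> lagrangian (- fst v) (- snd v) V"
proof -
  have "Rfun \<delta> (Eds \<delta> V) (Edx \<delta> V) \<le> MI \<delta> V" by (rule Rfun_le_MI) (simp add: feasible_def)
  moreover have "Rfun \<delta> a b + inner v ((Eds \<delta> V, Edx \<delta> V) - (a, b)) \<le> Rfun \<delta> (Eds \<delta> V) (Edx \<delta> V)"
    using v distortions_in_Dadm[of V] unfolding is_subgradient_def by fastforce
  ultimately show ?thesis by (cases v) (simp add: lagrangian_def algebra_simps)
qed

lemma subgradient_slackness:
  assumes p: "(a, b) \<in> Dadm \<delta>" and v: "is_subgradient (a, b) v" and W: "W \<in> Pstar \<delta> a b"
  shows "fst v * (a - Eds \<delta> W) = 0" "snd v * (b - Edx \<delta> W) = 0"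
    and subgradient_lagrangian_minimizer:
      "\<And>V. lagrangian (- fst v) (- snd v) W \<le> lagrangian (- fst v) (- snd v) V"
proof -
  have W: "Eds \<delta> W \<le> a" "Edx \<delta> W \<le> b" "MI \<delta> W = Rfun \<delta> a b"
    using W by (auto simp: Pstar_def feasible_def)
  have "fst v * (a - Eds \<delta> W) \<le> 0" "snd v * (b - Edx \<delta> W) \<le> 0"
    using subgradient_nonpos[OF p v] W by (simp_all add: mult_nonpos_nonneg)
  moreover have "lagrangian (- fst v) (- snd v) W
      = Rfun \<delta> a b - fst v * a - snd v * b + fst v * (a - Eds \<delta> W) + snd v * (b - Edx \<delta> W)"
    using W by (simp add: lagrangian_def algebra_simps)
  moreover note subgradient_lagrangian_lower_bound[OF v]
  ultimately show "fst v * (a - Eds \<delta> W) = 0" "snd v * (b - Edx \<delta> W) = 0"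
    "\<And>V. lagrangian (- fst v) (- snd v) W \<le> lagrangian (- fst v) (- snd v) V"
    by (smt (verit))+
qed

lemma Pstar_iff: "W \<in> Pstar \<delta> a b \<longleftrightarrow> feasible \<delta> a b W \<and> MI \<delta> W \<le> Rfun \<delta> a b"
  using Rfun_le_MI[of a b W] by (auto simp: Pstar_def)

lemma Rfun_le_if_reduction:
  assumes "(a', b') \<in> Dadm \<delta>"
    and reduce: "\<And>V. feasible \<delta> a' b' V \<Longrightarrow> \<exists>V'. feasible \<delta> a b V' \<and> MI \<delta> V' \<le> MI \<delta> V"
  shows "Rfun \<delta> a b \<le> Rfun \<delta> a' b'"
  unfolding Rfun_def[of \<delta> a' b']
proof (rule cInf_greatest)
  show "{MI \<delta> W | W. feasible \<delta> a' b' W} \<noteq> {}" using feasible_lossless_chan[OF assms(1)] by auto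
  fix y assume "y \<in> {MI \<delta> W | W. feasible \<delta> a' b' W}"
  then obtain V V' where "y = MI \<delta> V" "feasible \<delta> a b V'" "MI \<delta> V' \<le> MI \<delta> V" using reduce by blast
  then show "Rfun \<delta> a b \<le> y" using Rfun_le_MI[of a b V'] by simp
qed

lemma Rfun_half_le:
  assumes "0 \<le> b" "1/2 \<le> a'"
  shows "Rfun \<delta> (1/2) b \<le> Rfun \<delta> a' b"
proof (rule Rfun_le_if_reduction)
  show "(a', b) \<in> Dadm \<delta>" using assms erasure_prob_le_1 by (simp add: Dadm_iff)
  fix V assume V: "feasible \<delta> a' b V"
  show "\<exists>V'. feasible \<delta> (1/2) b V' \<and> MI \<delta> V' \<le> MI \<delta> V"
  proof (cases "Eds \<delta> V \<le> 1/2")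
    case True then show ?thesis using V by (auto simp: feasible_def)
  next
    case False
    then show ?thesis using V MI_flip_z_chan_le[of V]
      by (intro exI[of _ "flip_z_chan V"]) (simp add: feasible_def Eds_flip_z_chan Edx_flip_z_chan)
  qed
qed

lemma Rfun_const_y_le:
  assumes "(\<Sum>x\<in>UNIV. PX x * d_x x y0) \<le> b" "(a, b') \<in> Dadm \<delta>"
  shows "Rfun \<delta> a b \<le> Rfun \<delta> a b'"
proof (rule Rfun_le_if_reduction[OF assms(2)])
  fix V assume "feasible \<delta> a b' V"
  then show "\<exists>V'. feasible \<delta> a b V' \<and> MI \<delta> V' \<le> MI \<delta> V"
    using assms(1) MI_const_y_chan_le[of y0 V]
    by (intro exI[of _ "const_y_chan y0 V"]) (simp add: feasible_def Eds_const_y_chan Edx_const_y_chan)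
qed

lemma Rfun_copy_z_le:
  assumes "a + \<delta> / 2 \<le> b" "(a, b') \<in> Dadm \<delta>"
  shows "Rfun \<delta> a b \<le> Rfun \<delta> a b'"
proof (rule Rfun_le_if_reduction[OF assms(2)])
  fix V assume "feasible \<delta> a b' V"
  then show "\<exists>V'. feasible \<delta> a b V' \<and> MI \<delta> V' \<le> MI \<delta> V"
    using assms(1) MI_copy_z_chan_le[of V]
    by (intro exI[of _ "copy_z_chan V"]) (simp add: feasible_def Eds_copy_z_chan Edx_copy_z_chan)
qed

lemma D_in_subset_interior_Dadm: "D_in \<delta> \<subseteq> interior (Dadm \<delta>)"
  unfolding D_in_def
  by (intro Un_least interior_mono) (auto simp: D_sx_def D_sbar_x_def D_s_xbar_def D_sbar_xbar_def)

lemma interior_Dadm: "(a, b) \<in> interior (Dadm \<delta>) \<Longrightarrow> \<delta> / 2 < a \<and> 0 < b"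
proof -
  assume "(a, b) \<in> interior (Dadm \<delta>)"
  then obtain e where e: "0 < e" "ball (a, b) e \<subseteq> Dadm \<delta>" using mem_interior by blast
  then have "(a - e/2, b) \<in> Dadm \<delta>" "(a, b - e/2) \<in> Dadm \<delta>"
    by (auto intro!: subsetD[OF e(2)] simp: dist_Pair_Pair dist_real_def)
  then show ?thesis using e(1) by (simp add: Dadm_iff)
qed

lemma D_in_tight_s:
  assumes p: "(a, b) \<in> D_in \<delta>" and tight: "\<forall>W\<in>Pstar \<delta> a b. \<not> Eds \<delta> W < a"
  obtains e where "0 < e" "\<And>t W. 0 < t \<Longrightarrow> t < e \<Longrightarrow> W \<in> Pstar \<delta> (a + t) b \<Longrightarrow> Eds \<delta> W = a + t"
proof -
  have "(a, b) \<notin> D_sbar_x \<delta> \<union> D_sbar_xbar \<delta>"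
    using tight by (auto simp: D_sbar_x_def D_sbar_xbar_def)
  then have "(a, b) \<in> interior (D_sx \<delta>) \<union> interior (D_s_xbar \<delta>)"
    using p interior_subset unfolding D_in_def by blast
  then have "(a, b) \<in> interior (D_sx \<delta> \<union> D_s_xbar \<delta>)"
    by (meson Un_iff interior_mono subsetD sup_ge1 sup_ge2)
  then obtain e where e: "0 < e" "ball (a, b) e \<subseteq> D_sx \<delta> \<union> D_s_xbar \<delta>" using mem_interior by blast
  have "(a + t, b) \<in> D_sx \<delta> \<union> D_s_xbar \<delta>" if "0 < t" "t < e" for t
    using that by (intro subsetD[OF e(2)]) (simp add: dist_Pair_Pair dist_real_def)
  then show ?thesis using that[OF e(1)] by (auto simp: D_sx_def D_s_xbar_def)
qed

lemma D_in_tight_x: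
  assumes p: "(a, b) \<in> D_in \<delta>" and tight: "\<forall>W\<in>Pstar \<delta> a b. \<not> Edx \<delta> W < b"
  obtains e where "0 < e" "\<And>t W. 0 < t \<Longrightarrow> t < e \<Longrightarrow> W \<in> Pstar \<delta> a (b + t) \<Longrightarrow> Edx \<delta> W = b + t"
proof -
  have "(a, b) \<notin> D_s_xbar \<delta> \<union> D_sbar_xbar \<delta>"
    using tight by (auto simp: D_s_xbar_def D_sbar_xbar_def)
  then have "(a, b) \<in> interior (D_sx \<delta>) \<union> interior (D_sbar_x \<delta>)"
    using p interior_subset unfolding D_in_def by blast
  then have "(a, b) \<in> interior (D_sx \<delta> \<union> D_sbar_x \<delta>)"
    by (meson Un_iff interior_mono subsetD sup_ge1 sup_ge2)
  then obtain e where e: "0 < e" "ball (a, b) e \<subseteq> D_sx \<delta> \<union> D_sbar_x \<delta>" using mem_interior by blast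
  have "(a, b + t) \<in> D_sx \<delta> \<union> D_sbar_x \<delta>" if "0 < t" "t < e" for t
    using that by (intro subsetD[OF e(2)]) (simp add: dist_Pair_Pair dist_real_def)
  then show ?thesis using that[OF e(1)] by (auto simp: D_sx_def D_sbar_x_def)
qed

text \<open>Otherwise W would stay optimal, and become slack, after a small relaxation of the
  constraint, contradicting the cell structure of D_in.\<close>
lemma Rfun_decreasing_s:
  assumes p: "(a, b) \<in> D_in \<delta>" and W: "W \<in> Pstar \<delta> a b" and tight: "\<forall>W\<in>Pstar \<delta> a b. \<not> Eds \<delta> W < a"
    and flat: "\<And>t. 0 < t \<Longrightarrow> Rfun \<delta> a b \<le> Rfun \<delta> (a + t) b"
  shows False
proof -
  obtain e where e: "0 < e" "\<And>t W. 0 < t \<Longrightarrow> t < e \<Longrightarrow> W \<in> Pstar \<delta> (a + t) b \<Longrightarrow> Eds \<delta> W = a + t"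
    using D_in_tight_s[OF p tight] by blast
  have "feasible \<delta> a b W" "MI \<delta> W = Rfun \<delta> a b" using W by (auto simp: Pstar_def)
  then have "W \<in> Pstar \<delta> (a + e/2) b"
    using flat[of "e/2"] e(1) by (auto simp: Pstar_iff feasible_def)
  then have "Eds \<delta> W = a + e/2" using e by simp
  then show False using e(1) \<open>feasible \<delta> a b W\<close> by (simp add: feasible_def)
qed

lemma Rfun_decreasing_x:
  assumes p: "(a, b) \<in> D_in \<delta>" and W: "W \<in> Pstar \<delta> a b" and tight: "\<forall>W\<in>Pstar \<delta> a b. \<not> Edx \<delta> W < b"
    and flat: "\<And>t. 0 < t \<Longrightarrow> Rfun \<delta> a b \<le> Rfun \<delta> a (b + t)"
  shows False
proof -
  obtain e where e: "0 < e" "\<And>t W. 0 < t \<Longrightarrow> t < e \<Longrightarrow> W \<in> Pstar \<delta> a (b + t) \<Longrightarrow> Edx \<delta> W = b + t"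
    using D_in_tight_x[OF p tight] by blast
  have "feasible \<delta> a b W" "MI \<delta> W = Rfun \<delta> a b" using W by (auto simp: Pstar_def)
  then have "W \<in> Pstar \<delta> a (b + e/2)"
    using flat[of "e/2"] e(1) by (auto simp: Pstar_iff feasible_def)
  then have "Edx \<delta> W = b + e/2" using e by simp
  then show False using e(1) \<open>feasible \<delta> a b W\<close> by (simp add: feasible_def)
qed

text \<open>Both multiplier pairs make W the tilted channel of the same output marginal.\<close>
lemma tilt_cost_diff_const_on_support:
  assumes min1: "\<And>V. lagrangian ls lx W \<le> lagrangian ls lx V"
    and min2: "\<And>V. lagrangian ls' lx' W \<le> lagrangian ls' lx' V"
    and x: "0 < PX x" and r: "0 < out_marg \<delta> W r" and r': "0 < out_marg \<delta> W r'"
  shows "tilt_cost ls lx x r - tilt_cost ls' lx' x r = tilt_cost ls lx x r' - tilt_cost ls' lx' x r'"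
proof -
  let ?Q = "out_marg \<delta> W"
  have Q: "is_prob_fun ?Q" by (rule is_prob_fun_out_marg)
  let ?Z1 = "partition_fn ls lx ?Q x" and ?Z2 = "partition_fn ls' lx' ?Q x"
  have Z: "0 < ?Z1" "0 < ?Z2" by (rule partition_fn_pos[OF Q])+
  have "tilt_cost ls lx x s - tilt_cost ls' lx' x s = ln ?Z2 - ln ?Z1" if s: "0 < ?Q s" for s
  proof -
    have "ln (pmf (W x) s) = ln (?Q s) - tilt_cost ls lx x s - ln ?Z1"
      using s Z by (simp add: lagrangian_minimizer_tilted[OF min1 x] pmf_tilted_chan[OF Q] ln_divide_pos ln_mult_pos)
    moreover have "ln (pmf (W x) s) = ln (?Q s) - tilt_cost ls' lx' x s - ln ?Z2"
      using s Z by (simp add: lagrangian_minimizer_tilted[OF min2 x] pmf_tilted_chan[OF Q] ln_divide_pos ln_mult_pos)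
    ultimately show ?thesis by simp
  qed
  then show ?thesis using r r' by simp
qed

lemma exists_slack_minimizer_if_always_erased:
  assumes "\<delta> = 1" and p: "(a, b) \<in> interior (Dadm \<delta>)"
  shows "\<exists>W\<in>Pstar \<delta> a b. Eds \<delta> W < a \<and> Edx \<delta> W < b"
proof -
  let ?W = "const_chan (False, None)"
  have supp: "0 < pmf (?W x) r \<Longrightarrow> r = (False, None)" for x r
    by (auto simp: const_chan_def indicator_def split: if_splits)
  have "Edx \<delta> ?W = (\<Sum>x\<in>UNIV. PX x * d_x x None)"
    by (rule Edx_eq_if_const_y) (metis snd_conv supp)
  moreover have "d_x None None = 0" "d_x (Some bb) None = 1" for bb by (simp_all add: d_x_def)
  ultimately have "Edx \<delta> ?W = 1 - \<delta>" by (simp add: sum_sym)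
  moreover have "Eds \<delta> ?W = 1/2" by (rule Eds_eq_half_if_const_z[of _ False]) (metis fst_conv supp)
  moreover have "1/2 < a" "1 - \<delta> < b" using interior_Dadm[OF p] assms(1) by auto
  moreover have "0 \<le> Rfun \<delta> a b" using p interior_subset Rfun_nonneg by blast
  ultimately show ?thesis by (intro bexI[of _ ?W]) (auto simp: Pstar_iff feasible_def MI_const_chan)
qed

lemma Eds_eq_if_all_tight_s: "W \<in> Pstar \<delta> a b \<Longrightarrow> \<forall>W\<in>Pstar \<delta> a b. \<not> Eds \<delta> W < a \<Longrightarrow> Eds \<delta> W = a"
  by (force simp: Pstar_def feasible_def)

lemma Edx_eq_if_all_tight_x: "W \<in> Pstar \<delta> a b \<Longrightarrow> \<forall>W\<in>Pstar \<delta> a b. \<not> Edx \<delta> W < b \<Longrightarrow> Edx \<delta> W = b"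
  by (force simp: Pstar_def feasible_def)

lemma out_marg_support:
  "(\<forall>r. 0 < out_marg \<delta> W r \<longrightarrow> P r) \<Longrightarrow> 0 < PX x \<Longrightarrow> 0 < pmf (W x) r \<Longrightarrow> P r"
  using out_marg_pos by blast

lemma not_all_tight_s_at_half:
  assumes p: "(a, b) \<in> D_in \<delta>" and W: "W \<in> Pstar \<delta> a b"
    and tight: "\<forall>W\<in>Pstar \<delta> a b. \<not> Eds \<delta> W < a" and a: "a = 1/2"
  shows False
proof (rule Rfun_decreasing_s[OF p W tight])
  have "0 < b" using interior_Dadm D_in_subset_interior_Dadm p by blast
  then show "Rfun \<delta> a b \<le> Rfun \<delta> (a + t) b" if "0 < t" for t
    unfolding a using Rfun_half_le[of b "1/2 + t"] that by simp
qed

lemma not_all_tight_s_const_z: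
  assumes p: "(a, b) \<in> D_in \<delta>" and W: "W \<in> Pstar \<delta> a b"
    and tight: "\<forall>W\<in>Pstar \<delta> a b. \<not> Eds \<delta> W < a" and z: "\<forall>r. 0 < out_marg \<delta> W r \<longrightarrow> fst r = z0"
  shows False
proof (rule not_all_tight_s_at_half[OF p W tight])
  have "Eds \<delta> W = 1/2" by (rule Eds_eq_half_if_const_z) (rule out_marg_support[OF z])
  then show "a = 1/2" using Eds_eq_if_all_tight_s[OF W tight] by simp
qed

lemma not_all_tight_x_const_y:
  assumes p: "(a, b) \<in> D_in \<delta>" and W: "W \<in> Pstar \<delta> a b"
    and tight: "\<forall>W\<in>Pstar \<delta> a b. \<not> Edx \<delta> W < b" and y: "\<forall>r. 0 < out_marg \<delta> W r \<longrightarrow> snd r = y0"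
  shows False
proof (rule Rfun_decreasing_x[OF p W tight])
  have "(\<Sum>x\<in>UNIV. PX x * d_x x y0) = b"
    using Edx_eq_if_const_y[OF out_marg_support[OF y]] Edx_eq_if_all_tight_x[OF W tight] by simp
  moreover have "(a, b + t) \<in> Dadm \<delta>" if "0 < t" for t
    using that interior_Dadm D_in_subset_interior_Dadm p by (force simp: Dadm_iff)
  ultimately show "Rfun \<delta> a b \<le> Rfun \<delta> a (b + t)" if "0 < t" for t
    using Rfun_const_y_le[of y0 b a "b + t"] that by simp
qed

lemma not_all_tight_copy_z:
  assumes p: "(a, b) \<in> D_in \<delta>" and W: "W \<in> Pstar \<delta> a b"
    and tight_s: "\<forall>W\<in>Pstar \<delta> a b. \<not> Eds \<delta> W < a" and tight_x: "\<forall>W\<in>Pstar \<delta> a b. \<not> Edx \<delta> W < b"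
    and copy: "\<forall>r. 0 < out_marg \<delta> W r \<longrightarrow> snd r = Some (fst r)"
  shows False
proof (rule Rfun_decreasing_x[OF p W tight_x])
  have "b = a + \<delta> / 2"
    using Edx_eq_if_copy_z[OF out_marg_support[OF copy]] Eds_eq_if_all_tight_s[OF W tight_s]
      Edx_eq_if_all_tight_x[OF W tight_x] by simp
  moreover have "(a, b + t) \<in> Dadm \<delta>" if "0 < t" for t
    using that interior_Dadm D_in_subset_interior_Dadm p by (force simp: Dadm_iff)
  ultimately show "Rfun \<delta> a b \<le> Rfun \<delta> a (b + t)" if "0 < t" for t
    using Rfun_copy_z_le[of a b "b + t"] that by simp
qed

lemma not_all_tight_anticopy_z:
  assumes p: "(a, b) \<in> D_in \<delta>" and W: "W \<in> Pstar \<delta> a b"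
    and tight_s: "\<forall>W\<in>Pstar \<delta> a b. \<not> Eds \<delta> W < a" and tight_x: "\<forall>W\<in>Pstar \<delta> a b. \<not> Edx \<delta> W < b"
    and anticopy: "\<forall>r. 0 < out_marg \<delta> W r \<longrightarrow> snd r = Some (\<not> fst r)"
  shows False
proof -
  have a: "Eds \<delta> W = a" by (rule Eds_eq_if_all_tight_s[OF W tight_s])
  have b: "b = 1 - a + \<delta> / 2"
    using Edx_eq_if_anticopy_z[OF out_marg_support[OF anticopy]] a Edx_eq_if_all_tight_x[OF W tight_x] by simp
  have W': "feasible \<delta> a b W" "MI \<delta> W = Rfun \<delta> a b" using W by (auto simp: Pstar_def)
  consider "a < 1/2" | "1/2 < a" | "a = 1/2" by linarith
  then show False
  proof cases
    case 1
    then have "copy_z_chan W \<in> Pstar \<delta> a b" "Edx \<delta> (copy_z_chan W) < b"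
      using W' a b MI_copy_z_chan_le[of W]
      by (auto simp: Pstar_iff feasible_def Eds_copy_z_chan Edx_copy_z_chan)
    then show False using tight_x by blast
  next
    case 2
    then have "flip_z_chan W \<in> Pstar \<delta> a b" "Eds \<delta> (flip_z_chan W) < a"
      using W' a MI_flip_z_chan_le[of W]
      by (auto simp: Pstar_iff feasible_def Eds_flip_z_chan Edx_flip_z_chan)
    then show False using tight_s by blast
  qed (rule not_all_tight_s_at_half[OF p W tight_s])
qed

lemma all_tight_s_if_subgradients_differ:
  assumes pD: "(a, b) \<in> Dadm \<delta>" and v: "is_subgradient (a, b) v" and v': "is_subgradient (a, b) v'"
    and "fst v \<noteq> fst v'"
  shows "\<forall>W\<in>Pstar \<delta> a b. \<not> Eds \<delta> W < a"
proof (intro ballI notI)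
  fix W assume W: "W \<in> Pstar \<delta> a b" and "Eds \<delta> W < a"
  then show False using subgradient_slackness(1)[OF pD v W] subgradient_slackness(1)[OF pD v' W] assms(4)
    by simp
qed

lemma all_tight_x_if_subgradients_differ:
  assumes pD: "(a, b) \<in> Dadm \<delta>" and v: "is_subgradient (a, b) v" and v': "is_subgradient (a, b) v'"
    and "snd v \<noteq> snd v'"
  shows "\<forall>W\<in>Pstar \<delta> a b. \<not> Edx \<delta> W < b"
proof (intro ballI notI)
  fix W assume W: "W \<in> Pstar \<delta> a b" and "Edx \<delta> W < b"
  then show False using subgradient_slackness(2)[OF pD v W] subgradient_slackness(2)[OF pD v' W] assms(4)
    by simp
qed

lemma subgradients_diff_const_on_support:
  assumes pD: "(a, b) \<in> Dadm \<delta>" and W: "W \<in> Pstar \<delta> a b" and erasure: "\<delta> < 1"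
    and v: "is_subgradient (a, b) v" and v': "is_subgradient (a, b) v'"
    and r: "0 < out_marg \<delta> W r" and r': "0 < out_marg \<delta> W r'"
  shows "(fst v - fst v') * dbar_s (Some bb) (fst r) + (snd v - snd v') * d_x (Some bb) (snd r)
       = (fst v - fst v') * dbar_s (Some bb) (fst r') + (snd v - snd v') * d_x (Some bb) (snd r')"
proof -
  have "0 < PX (Some bb)" using erasure by simp
  then have "tilt_cost (- fst v) (- snd v) (Some bb) r - tilt_cost (- fst v') (- snd v') (Some bb) r
      = tilt_cost (- fst v) (- snd v) (Some bb) r' - tilt_cost (- fst v') (- snd v') (Some bb) r'"
    using subgradient_lagrangian_minimizer[OF pD v W] subgradient_lagrangian_minimizer[OF pD v' W] r r'
    by (intro tilt_cost_diff_const_on_support)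
  then show ?thesis by (simp add: tilt_cost_def algebra_simps)
qed

lemma subgradient_unique:
  assumes p: "(a, b) \<in> D_in \<delta>" and W: "W \<in> Pstar \<delta> a b"
    and v: "is_subgradient (a, b) v" and v': "is_subgradient (a, b) v'"
  shows "v = v'"
proof (rule ccontr)
  assume "v \<noteq> v'"
  define Ds Dx where "Ds = fst v - fst v'" and "Dx = snd v - snd v'"
  have D: "Ds \<noteq> 0 \<or> Dx \<noteq> 0" using \<open>v \<noteq> v'\<close> by (auto simp: Ds_def Dx_def prod_eq_iff)
  have pint: "(a, b) \<in> interior (Dadm \<delta>)" using p D_in_subset_interior_Dadm by blast
  then have pD: "(a, b) \<in> Dadm \<delta>" using interior_subset by blast
  have tight_s: "\<forall>W\<in>Pstar \<delta> a b. \<not> Eds \<delta> W < a" if "Ds \<noteq> 0"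
    using all_tight_s_if_subgradients_differ[OF pD v v'] that by (simp add: Ds_def)
  have tight_x: "\<forall>W\<in>Pstar \<delta> a b. \<not> Edx \<delta> W < b" if "Dx \<noteq> 0"
    using all_tight_x_if_subgradients_differ[OF pD v v'] that by (simp add: Dx_def)
  show False
  proof (cases "\<delta> = 1")
    case True
    then show False using exists_slack_minimizer_if_always_erased[OF True pint] D tight_s tight_x by blast
  next
    case False
    then have "\<delta> < 1" using erasure_prob_le_1 by simp
    let ?S = "{r. 0 < out_marg \<delta> W r}"
    obtain r1 where r1: "r1 \<in> ?S"
      using sum_out_marg[of W] out_marg_nonneg[of W] by (metis less_eq_real_def mem_Collect_eq sum.neutral zero_neq_one)
    have "(Ds \<noteq> 0 \<and> (\<forall>r\<in>?S. fst r = fst r1)) \<or> (Dx \<noteq> 0 \<and> (\<forall>r\<in>?S. snd r = snd r1))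
      \<or> (Ds \<noteq> 0 \<and> Dx \<noteq> 0 \<and> (\<forall>r\<in>?S. snd r = Some (fst r)))
      \<or> (Ds \<noteq> 0 \<and> Dx \<noteq> 0 \<and> (\<forall>r\<in>?S. snd r = Some (\<not> fst r)))"
      by (rule support_shapes[OF r1 D])
         (unfold Ds_def Dx_def, rule subgradients_diff_const_on_support[OF pD W \<open>\<delta> < 1\<close> v v']; simp)
    then show False
      using not_all_tight_s_const_z[OF p W tight_s] not_all_tight_x_const_y[OF p W tight_x]
        not_all_tight_copy_z[OF p W tight_s tight_x] not_all_tight_anticopy_z[OF p W tight_s tight_x]
      by auto
  qed
qed

section \<open>The multipliers and the d-tilted information\<close>

lemma convex_on_Rfun_slice_s: "0 \<le> b \<Longrightarrow> convex_on {\<delta>/2..} (\<lambda>t. Rfun \<delta> t b)"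
proof (rule convex_onI)
  fix t x y :: real assume "0 \<le> b" and t: "0 < t" "t < 1" and xy: "x \<in> {\<delta>/2..}" "y \<in> {\<delta>/2..}"
  then have "(x, b) \<in> Dadm \<delta>" "(y, b) \<in> Dadm \<delta>" by (auto simp: Dadm_iff)
  then show "Rfun \<delta> ((1 - t) *\<^sub>R x + t *\<^sub>R y) b \<le> (1 - t) * Rfun \<delta> x b + t * Rfun \<delta> y b"
    using convex_onD[OF convex_on_Rfun, of t "(x, b)" "(y, b)"] t by (simp add: algebra_simps)
qed simp

lemma convex_on_Rfun_slice_x: "\<delta>/2 \<le> a \<Longrightarrow> convex_on {0..} (\<lambda>t. Rfun \<delta> a t)"
proof (rule convex_onI)
  fix t x y :: real assume "\<delta>/2 \<le> a" and t: "0 < t" "t < 1" and xy: "x \<in> {0..}" "y \<in> {0..}"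
  then have "(a, x) \<in> Dadm \<delta>" "(a, y) \<in> Dadm \<delta>" by (auto simp: Dadm_iff)
  then show "Rfun \<delta> a ((1 - t) *\<^sub>R x + t *\<^sub>R y) \<le> (1 - t) * Rfun \<delta> a x + t * Rfun \<delta> a y"
    using convex_onD[OF convex_on_Rfun, of t "(a, x)" "(a, y)"] t by (simp add: algebra_simps)
qed simp

text \<open>The multipliers are defined through deriv, which is meaningful only where the partial
  derivatives exist. Every slope between the one-sided partial derivatives of R extends to a
  subgradient, so uniqueness of the subgradient forces the one-sided derivatives to agree.\<close>
lemma lambda_is_subgradient:
  assumes p: "(a, b) \<in> D_in \<delta>" and W: "W \<in> Pstar \<delta> a b"
  shows "is_subgradient (a, b) (- lam_s \<delta> a b, - lam_x \<delta> a b)"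
proof -
  have pint: "(a, b) \<in> interior (Dadm \<delta>)" using p D_in_subset_interior_Dadm by blast
  then have ab: "\<delta> / 2 < a" "0 < b" using interior_Dadm by auto
  interpret s: convex_halfline_point "\<lambda>t. Rfun \<delta> t b" "\<delta>/2" a
    by unfold_locales (use convex_on_Rfun_slice_s ab in auto)
  interpret x: convex_halfline_point "\<lambda>t. Rfun \<delta> a t" 0 b
    by unfold_locales (use convex_on_Rfun_slice_x ab in auto)
  have slope_s: "\<exists>v. fst v = c \<and> is_subgradient (a, b) v" if c: "s.left_deriv \<le> c" "c \<le> s.right_deriv" for c
  proof -
    obtain v where "inner v (1, 0) = c" "\<And>q. q \<in> Dadm \<delta> \<Longrightarrow> Rfun \<delta> a b + inner v (q - (a, b)) \<le> case_prod (Rfun \<delta>) q"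
      using supporting_line_extends_to_subgradient[OF convex_Dadm convex_on_Rfun pint, of "(1, 0)" c]
        s.supporting_line[OF c] by (force simp: Dadm_iff)
    then show ?thesis by (intro exI[of _ v]) (cases v, auto simp: is_subgradient_def)
  qed
  have slope_x: "\<exists>v. snd v = c \<and> is_subgradient (a, b) v" if c: "x.left_deriv \<le> c" "c \<le> x.right_deriv" for c
  proof -
    obtain v where "inner v (0, 1) = c" "\<And>q. q \<in> Dadm \<delta> \<Longrightarrow> Rfun \<delta> a b + inner v (q - (a, b)) \<le> case_prod (Rfun \<delta>) q"
      using supporting_line_extends_to_subgradient[OF convex_Dadm convex_on_Rfun pint, of "(0, 1)" c]
        x.supporting_line[OF c] by (force simp: Dadm_iff)
    then show ?thesis by (intro exI[of _ v]) (cases v, auto simp: is_subgradient_def)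
  qed
  obtain v1 v2 w1 w2 where
    "fst v1 = s.right_deriv" "fst v2 = s.left_deriv" "snd w1 = x.right_deriv" "snd w2 = x.left_deriv"
    and sub: "is_subgradient (a, b) v1" "is_subgradient (a, b) v2" "is_subgradient (a, b) w1" "is_subgradient (a, b) w2"
    using slope_s[OF s.left_deriv_le_right_deriv order_refl] slope_s[OF order_refl s.left_deriv_le_right_deriv]
      slope_x[OF x.left_deriv_le_right_deriv order_refl] slope_x[OF order_refl x.left_deriv_le_right_deriv]
    by metis
  moreover have "v2 = v1" "w1 = v1" "w2 = v1" using subgradient_unique[OF p W] sub by blast+
  ultimately have v1: "v1 = (s.right_deriv, x.right_deriv)" and "s.left_deriv = s.right_deriv"
    and "x.left_deriv = x.right_deriv" by (auto simp: prod_eq_iff)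
  then have "lam_s \<delta> a b = - s.right_deriv" "lam_x \<delta> a b = - x.right_deriv"
    using DERIV_imp_deriv[OF s.has_real_derivative_if_left_deriv_eq]
      DERIV_imp_deriv[OF x.has_real_derivative_if_left_deriv_eq]
    by (simp_all add: lam_s_def lam_x_def)
  then show ?thesis using sub(1) v1 by simp
qed

lemma lambda_nonneg:
  assumes "(a, b) \<in> D_in \<delta>" "W \<in> Pstar \<delta> a b"
  shows "0 \<le> lam_s \<delta> a b" "0 \<le> lam_x \<delta> a b"
  using subgradient_nonpos[OF _ lambda_is_subgradient[OF assms]] assms(1)
    D_in_subset_interior_Dadm interior_subset by (auto simp: subset_iff)

lemma jX_eq_partition_fn:
  assumes "0 < partition_fn (lam_s \<delta> a b) (lam_x \<delta> a b) (out_marg \<delta> W) x"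
  shows "jX \<delta> W x a b = - (lam_s \<delta> a b * a + lam_x \<delta> a b * b)
    - ln (partition_fn (lam_s \<delta> a b) (lam_x \<delta> a b) (out_marg \<delta> W) x)"
proof -
  let ?ls = "lam_s \<delta> a b" and ?lx = "lam_x \<delta> a b"
  have "(\<Sum>zy\<in>UNIV. out_marg \<delta> W zy * exp (?ls * a + ?lx * b - ?ls * dbar_s x (fst zy) - ?lx * d_x x (snd zy)))
      = exp (?ls * a + ?lx * b) * partition_fn ?ls ?lx (out_marg \<delta> W) x"
    unfolding partition_fn_def tilt_cost_def by (simp add: sum_distrib_left exp_diff exp_add exp_minus field_simps)
  then show ?thesis unfolding jX_def using assms by (simp add: ln_mult_pos)
qed

lemma tilted_information_exp_sum_le_1:
  assumes p: "(a, b) \<in> D_in \<delta>" and W: "W \<in> Pstar \<delta> a b"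
  shows "(\<Sum>x\<in>UNIV. PX x * exp (jX \<delta> W x a b + lam_s \<delta> a b * a + lam_x \<delta> a b * b
           - lam_s \<delta> a b * dbar_s x z - lam_x \<delta> a b * d_x x y)) \<le> 1"
proof -
  let ?ls = "lam_s \<delta> a b" and ?lx = "lam_x \<delta> a b" and ?Z = "partition_fn (lam_s \<delta> a b) (lam_x \<delta> a b) (out_marg \<delta> W)"
  have pD: "(a, b) \<in> Dadm \<delta>" using p D_in_subset_interior_Dadm interior_subset by blast
  have min: "\<And>V. lagrangian ?ls ?lx W \<le> lagrangian ?ls ?lx V"
    using subgradient_lagrangian_minimizer[OF pD lambda_is_subgradient[OF p W] W] by simp
  have "exp (jX \<delta> W x a b + ?ls * a + ?lx * b - ?ls * dbar_s x z - ?lx * d_x x y)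
      = exp (- tilt_cost ?ls ?lx x (z, y)) / ?Z x" for x
    using partition_fn_pos[OF is_prob_fun_out_marg, of ?ls ?lx W x]
    by (simp add: jX_eq_partition_fn tilt_cost_def exp_diff exp_add exp_minus field_simps)
  then show ?thesis using lagrangian_minimizer_kkt[OF min, of "(z, y)"] by simp
qed

end

section \<open>The converse bound for block codes\<close>

lemma sum_tilted_le_of_distortions_le:
  fixes g :: "sym \<Rightarrow> real"
  assumes "0 \<le> ls" "0 \<le> lx" "blk_ds k s z \<le> ds" "blk_dx k x y \<le> dx"
  shows "(\<Sum>i<k. g (x i) + ls * (d_s (s i) (z i) - dbar_s (x i) (z i)))
    \<le> (\<Sum>i<k. g (x i) + ls * ds + lx * dx - ls * dbar_s (x i) (z i) - lx * d_x (x i) (y i))"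
proof -
  have "(\<Sum>i<k. d_s (s i) (z i)) \<le> real k * ds" "(\<Sum>i<k. d_x (x i) (y i)) \<le> real k * dx"
    using assms(3,4) by (cases "k = 0"; simp add: blk_ds_def blk_dx_def divide_le_eq mult.commute)+
  then have "0 \<le> ls * (real k * ds - (\<Sum>i<k. d_s (s i) (z i))) + lx * (real k * dx - (\<Sum>i<k. d_x (x i) (y i)))"
    using assms(1,2) by simp
  also have "\<dots> = (\<Sum>i<k. g (x i) + ls * ds + lx * dx - ls * dbar_s (x i) (z i) - lx * d_x (x i) (y i))
      - (\<Sum>i<k. g (x i) + ls * (d_s (s i) (z i) - dbar_s (x i) (z i)))"
    by (simp add: sum.distrib sum_subtractf sum_distrib_left algebra_simps)
  finally show ?thesis by simp
qed

definition code_joint ::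
  "real \<Rightarrow> nat \<Rightarrow> ((nat \<Rightarrow> sym) \<Rightarrow> nat pmf) \<Rightarrow> (nat \<Rightarrow> ((nat \<Rightarrow> bool) \<times> (nat \<Rightarrow> sym)) pmf)
     \<Rightarrow> ((nat \<Rightarrow> bool \<times> sym) \<times> (nat \<Rightarrow> bool) \<times> (nat \<Rightarrow> sym)) pmf" where
  "code_joint \<delta> k enc dec =
     do { v \<leftarrow> efcf_block \<delta> k; u \<leftarrow> enc (\<lambda>i. snd (v i)); zy \<leftarrow> dec u; return_pmf (v, zy) }"

lemma code_joint_eq_bind:
  "code_joint \<delta> k enc dec = bind_pmf (efcf_block \<delta> k) (\<lambda>v. map_pmf (Pair v) (bind_pmf (enc (\<lambda>i. snd (v i))) dec))"
  unfolding code_joint_def map_pmf_def by (simp add: bind_assoc_pmf)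

lemma pmf_bind_map_pmf_Pair: "pmf (bind_pmf A (\<lambda>v. map_pmf (Pair v) (K v))) (v, zy) = pmf A v * pmf (K v) zy"
proof -
  have "pmf (map_pmf (Pair v') (K v')) (v, zy) = indicator {v} v' * pmf (K v) zy" for v'
  proof (cases "v' = v")
    case True
    then show ?thesis using pmf_map_inj'[of "Pair v" "K v" zy] by (simp add: inj_on_def)
  next
    case False
    then have "(v, zy) \<notin> set_pmf (map_pmf (Pair v') (K v'))" by auto
    then show ?thesis using False by (simp add: set_pmf_eq)
  qed
  then show ?thesis by (simp add: pmf_bind measure_pmf_single)
qed

lemma pmf_code_joint:
  "pmf (code_joint \<delta> k enc dec) (v, zy) = pmf (efcf_block \<delta> k) v * pmf (bind_pmf (enc (\<lambda>i. snd (v i))) dec) zy"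
  unfolding code_joint_eq_bind by (rule pmf_bind_map_pmf_Pair)

lemma map_fst_code_joint: "map_pmf fst (code_joint \<delta> k enc dec) = efcf_block \<delta> k"
  by (simp add: code_joint_eq_bind map_bind_pmf pmf.map_comp o_def map_pmf_const bind_return_pmf')

text \<open>An erased source bit is a fair coin independent of everything the encoder and decoder see,
  so this flip preserves the joint law of a code; it turns d_s(S_i, Z_i) - dbar_s(X_i, Z_i) into
  d_s(S_i, False) - dbar_s(X_i, False).\<close>
definition flip_erased :: "nat \<Rightarrow> (nat \<Rightarrow> bool) \<Rightarrow> (nat \<Rightarrow> bool \<times> sym) \<Rightarrow> nat \<Rightarrow> bool \<times> sym" where
  "flip_erased k z v = (\<lambda>i. if i < k \<and> snd (v i) = None \<and> z i then (\<not> fst (v i), None) else v i)"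

definition flip_erased_joint ::
  "nat \<Rightarrow> (nat \<Rightarrow> bool \<times> sym) \<times> (nat \<Rightarrow> bool) \<times> (nat \<Rightarrow> sym) \<Rightarrow> (nat \<Rightarrow> bool \<times> sym) \<times> (nat \<Rightarrow> bool) \<times> (nat \<Rightarrow> sym)" where
  "flip_erased_joint k w = (flip_erased k (fst (snd w)) (fst w), snd w)"

lemma flip_erased_involution: "flip_erased k z (flip_erased k z v) = v"
  unfolding flip_erased_def by (auto simp: fun_eq_iff prod_eq_iff)

lemma flip_erased_joint_involution: "flip_erased_joint k (flip_erased_joint k w) = w"
  unfolding flip_erased_joint_def by (simp add: flip_erased_involution)

lemma snd_flip_erased: "snd (flip_erased k z v i) = snd (v i)"
  unfolding flip_erased_def by auto

context efcf_source
begin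

lemma pmf_efcf_block_flip_erased: "pmf (efcf_block \<delta> k) (flip_erased k z v) = pmf (efcf_block \<delta> k) v"
proof -
  have "(\<forall>i. i \<notin> {..<k} \<longrightarrow> flip_erased k z v i = (False, None)) \<longleftrightarrow> (\<forall>i. i \<notin> {..<k} \<longrightarrow> v i = (False, None))"
    by (auto simp: flip_erased_def)
  moreover have "pmf (efcf \<delta>) (flip_erased k z v i) = pmf (efcf \<delta>) (v i)" for i
    by (cases "v i") (auto simp: flip_erased_def pmf_efcf split: option.splits)
  ultimately show ?thesis by (simp only: efcf_block_def pmf_Pi[OF finite_lessThan])
qed

lemma map_pmf_flip_erased_joint: "map_pmf (flip_erased_joint k) (code_joint \<delta> k enc dec) = code_joint \<delta> k enc dec"
proof (rule pmf_eqI)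
  fix w
  obtain v zy where w: "flip_erased_joint k w = (v, zy)" by (cases "flip_erased_joint k w") blast
  then have "snd w = zy" "flip_erased k (fst zy) (fst w) = v" by (auto simp: flip_erased_joint_def)
  then have w': "w = (flip_erased k (fst zy) v, zy)" by (metis flip_erased_involution prod.collapse)
  have "inj (flip_erased_joint k)" by (metis flip_erased_joint_involution injI)
  then have "pmf (map_pmf (flip_erased_joint k) (code_joint \<delta> k enc dec)) w
      = pmf (code_joint \<delta> k enc dec) (flip_erased_joint k w)"
    by (metis flip_erased_joint_involution pmf_map_inj')
  also have "\<dots> = pmf (code_joint \<delta> k enc dec) (v, zy)" by (simp only: w)
  also have "\<dots> = pmf (code_joint \<delta> k enc dec) w"
    unfolding w' pmf_code_joint by (simp add: pmf_efcf_block_flip_erased snd_flip_erased)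
  finally show "pmf (map_pmf (flip_erased_joint k) (code_joint \<delta> k enc dec)) w = pmf (code_joint \<delta> k enc dec) w" .
qed

lemma set_pmf_efcf_block_unerased:
  assumes "v \<in> set_pmf (efcf_block \<delta> k)" "i < k" "snd (v i) = Some b"
  shows "fst (v i) = b"
proof -
  have "(\<Prod>i\<in>{..<k}. pmf (efcf \<delta>) (v i)) \<noteq> 0"
    using assms(1) unfolding set_pmf_eq efcf_block_def pmf_Pi[OF finite_lessThan] by (auto split: if_splits)
  then have "pmf (efcf \<delta>) (v i) \<noteq> 0" using assms(2) by auto
  then show ?thesis using assms(3) by (cases "v i") (auto simp: pmf_efcf split: if_splits)
qed

lemma prob_code_joint_flip_erased:
  "measure_pmf.prob (code_joint \<delta> k enc dec)
      {w. c \<le> (\<Sum>i<k. g (snd (fst w i)) + ls * (d_s (fst (fst w i)) (fst (snd w) i) - dbar_s (snd (fst w i)) (fst (snd w) i)))}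
    = measure_pmf.prob (efcf_block \<delta> k) {v. c \<le> (\<Sum>i<k. g (snd (v i)) + ls * (d_s (fst (v i)) False - dbar_s (snd (v i)) False))}"
  (is "measure_pmf.prob ?J ?B' = measure_pmf.prob ?\<mu> ?B")
proof -
  have "flip_erased_joint k w \<in> ?B' \<longleftrightarrow> fst w \<in> ?B" if w: "w \<in> set_pmf ?J" for w
  proof -
    have v: "fst w \<in> set_pmf ?\<mu>" using w unfolding code_joint_eq_bind by auto
    let ?w' = "flip_erased_joint k w"
    have "g (snd (fst ?w' i)) + ls * (d_s (fst (fst ?w' i)) (fst (snd ?w') i) - dbar_s (snd (fst ?w' i)) (fst (snd ?w') i))
        = g (snd (fst w i)) + ls * (d_s (fst (fst w i)) False - dbar_s (snd (fst w i)) False)" if i: "i < k" for i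
      using set_pmf_efcf_block_unerased[OF v i] i
      by (cases "fst w i"; cases "snd (fst w i)"; cases "fst (snd w) i")
         (auto simp: flip_erased_joint_def flip_erased_def d_s_def dbar_s_def)
    then have "(\<Sum>i<k. g (snd (fst ?w' i)) + ls * (d_s (fst (fst ?w' i)) (fst (snd ?w') i)
          - dbar_s (snd (fst ?w' i)) (fst (snd ?w') i)))
        = (\<Sum>i<k. g (snd (fst w i)) + ls * (d_s (fst (fst w i)) False - dbar_s (snd (fst w i)) False))"
      by (intro sum.cong refl) simp
    then show ?thesis by simp
  qed
  then have preimages: "flip_erased_joint k -` ?B' \<inter> set_pmf ?J = fst -` ?B \<inter> set_pmf ?J" by blast
  have "measure_pmf.prob ?J ?B' = measure_pmf.prob (map_pmf (flip_erased_joint k) ?J) ?B'"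
    by (simp only: map_pmf_flip_erased_joint)
  also have "\<dots> = measure_pmf.prob ?J (flip_erased_joint k -` ?B' \<inter> set_pmf ?J)"
    by (simp add: measure_Int_set_pmf)
  also have "\<dots> = measure_pmf.prob ?J (fst -` ?B)"
    by (simp only: preimages measure_Int_set_pmf)
  also have "\<dots> = measure_pmf.prob ?\<mu> ?B"
    by (simp only: map_fst_code_joint[of \<delta> k enc dec, symmetric] measure_map_pmf)
  finally show ?thesis .
qed

lemma nn_integral_exp_efcf_le_1:
  assumes "(\<Sum>x\<in>UNIV. PX x * exp (g x)) \<le> 1"
  shows "(\<integral>\<^sup>+w. ennreal (exp (g (snd w))) \<partial>efcf \<delta>) \<le> 1"
proof -
  have "(\<integral>\<^sup>+w. ennreal (exp (g (snd w))) \<partial>efcf \<delta>) = (\<integral>\<^sup>+x. ennreal (exp (g x)) \<partial>efcfX \<delta>)"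
    unfolding efcfX_def by simp
  also have "\<dots> = (\<Sum>x\<in>UNIV. ennreal (exp (g x)) * PX x)"
    by (rule nn_integral_measure_pmf_support) auto
  also have "\<dots> = (\<Sum>x\<in>UNIV. ennreal (PX x * exp (g x)))"
    by (intro sum.cong refl) (simp add: ennreal_mult mult.commute)
  also have "\<dots> = ennreal (\<Sum>x\<in>UNIV. PX x * exp (g x))"
    by (rule sum_ennreal) simp
  finally show ?thesis using assms by simp
qed

text \<open>Each letter contributes a factor at most 1 whatever the reconstruction, so only the sum
  over the M codewords remains.\<close>
lemma nn_integral_exp_code_joint_le:
  fixes h :: "sym \<Rightarrow> bool \<Rightarrow> sym \<Rightarrow> real"
  assumes h: "\<And>z y. (\<Sum>x\<in>UNIV. PX x * exp (h x z y)) \<le> 1"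
    and enc: "\<And>x. set_pmf (enc x) \<subseteq> {1..M}"
  shows "(\<integral>\<^sup>+w. ennreal (exp (\<Sum>i<k. h (snd (fst w i)) (fst (snd w) i) (snd (snd w) i))) \<partial>code_joint \<delta> k enc dec)
    \<le> of_nat M"
proof -
  define F where "F = (\<lambda>(v :: nat \<Rightarrow> bool \<times> sym) (zy :: (nat \<Rightarrow> bool) \<times> (nat \<Rightarrow> sym)).
    ennreal (exp (\<Sum>i<k. h (snd (v i)) (fst zy i) (snd zy i))))"
  have letterwise: "(\<integral>\<^sup>+v. F v zy \<partial>efcf_block \<delta> k) \<le> 1" for zy
  proof -
    have "(\<integral>\<^sup>+v. F v zy \<partial>efcf_block \<delta> k)
        = (\<integral>\<^sup>+v. (\<Prod>i\<in>{..<k}. ennreal (exp (h (snd (v i)) (fst zy i) (snd zy i)))) \<partial>efcf_block \<delta> k)"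
      unfolding F_def by (simp add: exp_sum prod_ennreal)
    also have "\<dots> = (\<Prod>i\<in>{..<k}. \<integral>\<^sup>+w. ennreal (exp (h (snd w) (fst zy i) (snd zy i))) \<partial>efcf \<delta>)"
      unfolding efcf_block_def
      by (rule nn_integral_prod_Pi_pmf[where f = "\<lambda>i w. ennreal (exp (h (snd w) (fst zy i) (snd zy i)))"]) simp
    also have "\<dots> \<le> 1"
      by (rule prod_le_1) (use nn_integral_exp_efcf_le_1[OF h] in auto)
    finally show ?thesis .
  qed
  have codewords: "(\<integral>\<^sup>+u. G u \<partial>enc x) \<le> (\<Sum>u\<in>{1..M}. G u)" for x G
  proof -
    have "(\<integral>\<^sup>+u. G u \<partial>enc x) = (\<Sum>u\<in>{1..M}. G u * pmf (enc x) u)"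
      using enc[of x] by (intro nn_integral_measure_pmf_support) auto
    also have "\<dots> \<le> (\<Sum>u\<in>{1..M}. G u)"
      by (intro sum_mono) (simp add: mult_left_le pmf_le_1)
    finally show ?thesis .
  qed
  have "(\<integral>\<^sup>+w. ennreal (exp (\<Sum>i<k. h (snd (fst w i)) (fst (snd w) i) (snd (snd w) i))) \<partial>code_joint \<delta> k enc dec)
      = (\<integral>\<^sup>+v. \<integral>\<^sup>+u. \<integral>\<^sup>+zy. F v zy \<partial>dec u \<partial>enc (\<lambda>i. snd (v i)) \<partial>efcf_block \<delta> k)"
    unfolding code_joint_def F_def by simp
  also have "\<dots> \<le> (\<integral>\<^sup>+v. (\<Sum>u\<in>{1..M}. \<integral>\<^sup>+zy. F v zy \<partial>dec u) \<partial>efcf_block \<delta> k)"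
    by (intro nn_integral_mono codewords)
  also have "\<dots> = (\<Sum>u\<in>{1..M}. \<integral>\<^sup>+v. \<integral>\<^sup>+zy. F v zy \<partial>dec u \<partial>efcf_block \<delta> k)"
    by (rule nn_integral_sum) simp
  also have "\<dots> = (\<Sum>u\<in>{1..M}. \<integral>\<^sup>+zy. \<integral>\<^sup>+v. F v zy \<partial>efcf_block \<delta> k \<partial>dec u)"
    by (intro sum.cong refl nn_integral_swap_pmf)
  also have "\<dots> \<le> (\<Sum>u\<in>{1..M}. \<integral>\<^sup>+zy. 1 \<partial>dec u)"
    by (intro sum_mono nn_integral_mono letterwise)
  finally show ?thesis by simp
qed

lemma code_error_ge:
  assumes p: "(ds, dx) \<in> D_in \<delta>" and code: "is_code \<delta> k M ds dx \<epsilon> enc dec" and W: "W \<in> Pstar \<delta> ds dx"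
  shows "measure_pmf.prob (efcf_block \<delta> k)
           {v. (\<Sum>i<k. jX \<delta> W (snd (v i)) ds dx
                 + lam_s \<delta> ds dx * (d_s (fst (v i)) False - dbar_s (snd (v i)) False))
               \<ge> \<gamma> + ln (real M)}
         - exp (- \<gamma>) \<le> \<epsilon>"
proof -
  let ?ls = "lam_s \<delta> ds dx" and ?lx = "lam_x \<delta> ds dx" and ?J = "code_joint \<delta> k enc dec"
  define Err where "Err = {(v, z, y). ds < blk_ds k (\<lambda>i. fst (v i)) z \<or> dx < blk_dx k (\<lambda>i. snd (v i)) y}"
  have enc: "\<And>x. set_pmf (enc x) \<subseteq> {1..M}" and err: "measure_pmf.prob ?J Err \<le> \<epsilon>"
    using code unfolding is_code_def code_joint_def Err_def by auto
  obtain u where "u \<in> set_pmf (enc (\<lambda>_. None))" using set_pmf_not_empty by fast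
  then have M: "0 < real M" using enc[of "\<lambda>_. None"] by auto
  define h where "h x z y = jX \<delta> W x ds dx + ?ls * ds + ?lx * dx - ?ls * dbar_s x z - ?lx * d_x x y" for x z y
  define H where "H w = (\<Sum>i<k. h (snd (fst w i)) (fst (snd w) i) (snd (snd w) i))"
    for w :: "(nat \<Rightarrow> bool \<times> sym) \<times> (nat \<Rightarrow> bool) \<times> (nat \<Rightarrow> sym)"
  have "(\<integral>\<^sup>+w. ennreal (exp (H w)) \<partial>?J) \<le> ennreal (real M)"
    unfolding H_def h_def using nn_integral_exp_code_joint_le[OF tilted_information_exp_sum_le_1[OF p W] enc]
    by (simp add: ennreal_of_nat_eq_real_of_nat)
  then have "measure_pmf.prob ?J {w. \<gamma> + ln (real M) \<le> H w} \<le> exp (- (\<gamma> + ln (real M))) * real M"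
    by (rule measure_pmf_exp_tail_le) simp
  also have "\<dots> = exp (- \<gamma>)" using M by (simp add: exp_diff exp_minus field_simps)
  finally have tail: "measure_pmf.prob ?J {w. \<gamma> + ln (real M) \<le> H w} \<le> exp (- \<gamma>)" .
  have "measure_pmf.prob (efcf_block \<delta> k)
           {v. (\<Sum>i<k. jX \<delta> W (snd (v i)) ds dx + ?ls * (d_s (fst (v i)) False - dbar_s (snd (v i)) False))
               \<ge> \<gamma> + ln (real M)}
      = measure_pmf.prob ?J {w. \<gamma> + ln (real M) \<le> (\<Sum>i<k. jX \<delta> W (snd (fst w i)) ds dx
          + ?ls * (d_s (fst (fst w i)) (fst (snd w) i) - dbar_s (snd (fst w i)) (fst (snd w) i)))}"
    by (rule prob_code_joint_flip_erased[symmetric])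
  also have "\<dots> \<le> measure_pmf.prob ?J (Err \<union> {w. \<gamma> + ln (real M) \<le> H w})"
    using lambda_nonneg[OF p W]
    by (intro measure_pmf.finite_measure_mono)
       (auto simp: Err_def H_def h_def intro: order_trans[OF _ sum_tilted_le_of_distortions_le])
  also have "\<dots> \<le> measure_pmf.prob ?J Err + measure_pmf.prob ?J {w. \<gamma> + ln (real M) \<le> H w}"
    by (rule measure_Un_le) auto
  finally show ?thesis using err tail by linarith
qed

end

theorem theorem8:
  fixes \<delta> ds dx \<epsilon> :: real and k M :: nat
    and enc :: "(nat \<Rightarrow> sym) \<Rightarrow> nat pmf"
    and dec :: "nat \<Rightarrow> ((nat \<Rightarrow> bool) \<times> (nat \<Rightarrow> sym)) pmf"
    and W :: chan
  assumes "0 \<le> \<delta>" and "\<delta> \<le> 1"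
    and "(ds, dx) \<in> D_in \<delta>"
    and "is_code \<delta> k M ds dx \<epsilon> enc dec"
    and "W \<in> Pstar \<delta> ds dx"
  shows "(SUP \<gamma>\<in>{0..}.
           measure_pmf.prob (efcf_block \<delta> k)
             {v. (\<Sum>i<k. jX \<delta> W (snd (v i)) ds dx
                   + lam_s \<delta> ds dx * (d_s (fst (v i)) False - dbar_s (snd (v i)) False))
                 \<ge> \<gamma> + ln (real M)}
           - exp (- \<gamma>)) \<le> \<epsilon>"
proof -
  interpret efcf_source \<delta> using assms(1,2) by unfold_locales
  show ?thesis by (rule cSUP_least) (use code_error_ge[OF assms(3-5)] in auto)
qed

end
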